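(* Let $\overline Q$ be an acyclic stable $n$-translation quiver with $n$-translation $\tau$ and finitely many $\tau$-orbits, and let $Q$ be a complete $\tau$-slice of $\overline Q$. Let $i,i_0$ be vertices of $Q$ different from a vertex $j$ of $Q$. (1) If $j$ is a sink of $Q$ and $w$ is a walk in $Q$ from $i_0$ to $i$ having $j$ as a sink, then there is a walk $w'$ in $s_j^-Q$ from $i_0$ to $i$ having $\tau j$ as a source such that $u_{i_0,w}(i)=u_{i_0,w'}(i)$. (2) If $j$ is a source of $Q$ and $w$ is a walk in $Q$ from $i_0$ to $i$ having $j$ as a source, then there is a walk $w'$ in $s_j^+Q$ from $i_0$ to $i$ having $\tau^{-1}j$ as a sink such that $u_{i_0,w}(i)=u_{i_0,w'}(i)$.
   Context: $k$ is a field. Bound quivers have relations that are linear combinations of paths of equal length $\ge2$ with common source and target; paths are composed right to left; $s(p),t(p),l(p)$ denote source, target, length; bound paths are paths with nonzero image in the quotient algebra. A stable $n$-translation quiver is the bound quiver of a graded self-injective algebra of Loewy length $n+2$ (generated in degrees $0,1$) with the bijection $\tau$ on vertices induced by the Nakayama permutation; each bound path of length $n+1$ goes from $\tau i$ to $i$ for some $i$. If $\overline Q$ is acyclic with finitely many $\tau$-orbits, a complete $\tau$-slice is a full subquiver $Q$ which meets each $\tau$-orbit in exactly one vertex and is convex (every path of $\overline Q$ between vertices of $Q$ lies in $Q$), with the relations of $\overline Q$ all of whose paths lie in $Q$. For a sink $j$ of $Q$, the $\tau$-mutation $s_j^-Q$ is the full subquiver of $\overline Q$ on $(Q_0\setminus\{j\})\cup\{\tau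 j\}$; for a source $j$, $s_j^+Q$ is the full subquiver on $(Q_0\setminus\{j\})\cup\{\tau^{-1}j\}$. A walk from $a$ to $b$ is a sequence $w=(p_0,\dots,p_r)$ of paths with $l(p_h)>0$ for $0<h<r$, $t(p_{2h})=t(p_{2h+1})$, $s(p_{2h+1})=s(p_{2h+2})$, $s(p_0)=a$, ending at $b=t(p_r)$ ($r$ even) or $s(p_r)$ ($r$ odd); its sinks are the vertices $t(p_{2h})=t(p_{2h+1})$ and its sources the vertices $s(p_{2h+1})=s(p_{2h+2})$. Its grade is $u_{a,w}(b)=\sum_h(-1)^hl(p_h)$. *)

theory Defs
  imports Main
begin

text \<open>A path is a pair (starting vertex, list of arrows in the order in which they are traversed);
the trivial path at v is (v, []). Composition q \<circ> r (r first, then q; paths composed right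
to left) is pcomp q r.\<close>

type_synonym ('v,'a) path = "'v \<times> 'a list"

definition psrc :: "('v,'a) path \<Rightarrow> 'v" where
  "psrc p = fst p"

definition ptgt :: "('a \<Rightarrow> 'v) \<Rightarrow> ('v,'a) path \<Rightarrow> 'v" where
  "ptgt t p = (if snd p = [] then fst p else t (last (snd p)))"

definition plen :: "('v,'a) path \<Rightarrow> nat" where
  "plen p = length (snd p)"

fun chain :: "('a \<Rightarrow> 'v) \<Rightarrow> ('a \<Rightarrow> 'v) \<Rightarrow> 'v \<Rightarrow> 'a list \<Rightarrow> bool" where
  "chain s t v [] = True"
| "chain s t v (a # as) = (s a = v \<and> chain s t (t a) as)"

definition is_path :: "'v set \<Rightarrow> 'a set \<Rightarrow> ('a \<Rightarrow> 'v) \<Rightarrow> ('a \<Rightarrow> 'v) \<Rightarrow> ('v,'a) path \<Rightarrow> bool" where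
  "is_path V Arr s t p \<longleftrightarrow> fst p \<in> V \<and> set (snd p) \<subseteq> Arr \<and> chain s t (fst p) (snd p)"

definition pverts :: "('a \<Rightarrow> 'v) \<Rightarrow> ('v,'a) path \<Rightarrow> 'v set" where
  "pverts t p = insert (fst p) (t ` set (snd p))"

definition pcomp :: "('v,'a) path \<Rightarrow> ('v,'a) path \<Rightarrow> ('v,'a) path" where
  "pcomp q r = (fst r, snd r @ snd q)"

text \<open>Elements of the path algebra kQ: finitely supported k-valued functions on paths.\<close>

definition is_elem :: "'v set \<Rightarrow> 'a set \<Rightarrow> ('a \<Rightarrow> 'v) \<Rightarrow> ('a \<Rightarrow> 'v)
    \<Rightarrow> (('v,'a) path \<Rightarrow> 'k::field) \<Rightarrow> bool" where
  "is_elem V Arr s t x \<longleftrightarrow> finite {p. x p \<noteq> 0} \<and> (\<forall>p. x p \<noteq> 0 \<longrightarrow> is_path V Arr s t p)"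

definition pmult :: "'v set \<Rightarrow> 'a set \<Rightarrow> ('a \<Rightarrow> 'v) \<Rightarrow> ('a \<Rightarrow> 'v)
    \<Rightarrow> (('v,'a) path \<Rightarrow> 'k::field) \<Rightarrow> (('v,'a) path \<Rightarrow> 'k) \<Rightarrow> (('v,'a) path \<Rightarrow> 'k)" where
  "pmult V Arr s t x y = (\<lambda>w. \<Sum>(q,r) \<in> {(q,r). is_path V Arr s t q \<and> is_path V Arr s t r
        \<and> ptgt t r = psrc q \<and> pcomp q r = w}. x q * y r)"

definition single :: "('v,'a) path \<Rightarrow> (('v,'a) path \<Rightarrow> 'k::field)" where
  "single p = (\<lambda>w. if w = p then 1 else 0)"

definition is_relation :: "'v set \<Rightarrow> 'a set \<Rightarrow> ('a \<Rightarrow> 'v) \<Rightarrow> ('a \<Rightarrow> 'v)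
    \<Rightarrow> (('v,'a) path \<Rightarrow> 'k::field) \<Rightarrow> bool" where
  "is_relation V Arr s t x \<longleftrightarrow> is_elem V Arr s t x \<and>
     (\<exists>a b l. l \<ge> 2 \<and> (\<forall>p. x p \<noteq> 0 \<longrightarrow> psrc p = a \<and> ptgt t p = b \<and> plen p = l))"

inductive_set rel_ideal :: "'v set \<Rightarrow> 'a set \<Rightarrow> ('a \<Rightarrow> 'v) \<Rightarrow> ('a \<Rightarrow> 'v)
    \<Rightarrow> (('v,'a) path \<Rightarrow> 'k::field) set \<Rightarrow> (('v,'a) path \<Rightarrow> 'k) set"
  for V Arr s t \<rho> where
  zero: "(\<lambda>_. 0) \<in> rel_ideal V Arr s t \<rho>"
| step: "x \<in> rel_ideal V Arr s t \<rho> \<Longrightarrow> r \<in> \<rho> \<Longrightarrow> is_elem V Arr s t a \<Longrightarrow> is_elem V Arr s t b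
         \<Longrightarrow> (\<lambda>w. x w + pmult V Arr s t a (pmult V Arr s t r b) w) \<in> rel_ideal V Arr s t \<rho>"

definition bound_path :: "'v set \<Rightarrow> 'a set \<Rightarrow> ('a \<Rightarrow> 'v) \<Rightarrow> ('a \<Rightarrow> 'v)
    \<Rightarrow> (('v,'a) path \<Rightarrow> 'k::field) set \<Rightarrow> ('v,'a) path \<Rightarrow> bool" where
  "bound_path V Arr s t \<rho> p \<longleftrightarrow> is_path V Arr s t p \<and> (single p :: ('v,'a) path \<Rightarrow> 'k) \<notin> rel_ideal V Arr s t \<rho>"

definition hom_part :: "'v set \<Rightarrow> 'a set \<Rightarrow> ('a \<Rightarrow> 'v) \<Rightarrow> ('a \<Rightarrow> 'v)
    \<Rightarrow> 'v \<Rightarrow> 'v \<Rightarrow> nat \<Rightarrow> (('v,'a) path \<Rightarrow> 'k::field) set" where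
  "hom_part V Arr s t i j d = {x. is_elem V Arr s t x \<and>
     (\<forall>p. x p \<noteq> 0 \<longrightarrow> psrc p = i \<and> ptgt t p = j \<and> plen p = d)}"

text \<open>(V,Arr,s,t,\<rho>) is the bound quiver of a (locally bounded) graded self-injective algebra
\<Lambda> = kQ/(\<rho>) of Loewy length n+2 (graded by path length, hence generated in degrees 0,1),
and \<tau> is the bijection induced by the Nakayama permutation.  Graded self-injectivity is
expressed in the standard graded-Frobenius form: \<Lambda>_{n+2} = 0; for each vertex i the top
degree part \<Lambda>_{n+1} e_? ending in i is one-dimensional, spanned by a bound path from \<tau> i to i,
and every bound path of length n+1 ending at i starts at \<tau> i; and multiplication into
degree n+1 is nondegenerate on both sides (so the socle of every indecomposable projective,
left and right, is its simple degree n+1 part).\<close>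

definition stable_ntq :: "'v set \<Rightarrow> 'a set \<Rightarrow> ('a \<Rightarrow> 'v) \<Rightarrow> ('a \<Rightarrow> 'v)
    \<Rightarrow> (('v,'a) path \<Rightarrow> 'k::field) set \<Rightarrow> nat \<Rightarrow> ('v \<Rightarrow> 'v) \<Rightarrow> bool" where
  "stable_ntq V Arr s t \<rho> n \<tau> \<longleftrightarrow>
     (\<forall>\<alpha>\<in>Arr. s \<alpha> \<in> V \<and> t \<alpha> \<in> V)
   \<and> (\<forall>v\<in>V. finite {\<alpha>\<in>Arr. s \<alpha> = v} \<and> finite {\<alpha>\<in>Arr. t \<alpha> = v})
   \<and> (\<forall>r\<in>\<rho>. is_relation V Arr s t r)
   \<and> bij_betw \<tau> V V
   \<and> (\<forall>p. is_path V Arr s t p \<and> plen p = n + 2 \<longrightarrow> single p \<in> rel_ideal V Arr s t \<rho>)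
   \<and> (\<forall>p. bound_path V Arr s t \<rho> p \<and> plen p = n + 1 \<longrightarrow> psrc p = \<tau> (ptgt t p))
   \<and> (\<forall>i\<in>V. \<exists>p. bound_path V Arr s t \<rho> p \<and> plen p = n + 1 \<and> ptgt t p = i \<and>
        (\<forall>x\<in>hom_part V Arr s t (\<tau> i) i (n + 1).
           \<exists>c. (\<lambda>w. x w - c * single p w) \<in> rel_ideal V Arr s t \<rho>))
   \<and> (\<forall>i j d x. d \<le> n + 1 \<and> x \<in> hom_part V Arr s t i j d \<and> x \<notin> rel_ideal V Arr s t \<rho> \<longrightarrow>
        (\<exists>q. is_path V Arr s t q \<and> psrc q = j \<and> plen q = n + 1 - d \<and>
             pmult V Arr s t (single q) x \<notin> rel_ideal V Arr s t \<rho>)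
      \<and> (\<exists>p. is_path V Arr s t p \<and> ptgt t p = i \<and> plen p = n + 1 - d \<and>
             pmult V Arr s t x (single p) \<notin> rel_ideal V Arr s t \<rho>))"

definition acyclic_quiver :: "'v set \<Rightarrow> 'a set \<Rightarrow> ('a \<Rightarrow> 'v) \<Rightarrow> ('a \<Rightarrow> 'v) \<Rightarrow> bool" where
  "acyclic_quiver V Arr s t \<longleftrightarrow>
     (\<forall>p. is_path V Arr s t p \<and> plen p > 0 \<longrightarrow> psrc p \<noteq> ptgt t p)"

definition tau_inv :: "'v set \<Rightarrow> ('v \<Rightarrow> 'v) \<Rightarrow> 'v \<Rightarrow> 'v" where
  "tau_inv V \<tau> = inv_into V \<tau>"

definition tau_orbit :: "'v set \<Rightarrow> ('v \<Rightarrow> 'v) \<Rightarrow> 'v \<Rightarrow> 'v set" where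
  "tau_orbit V \<tau> i = {(\<tau> ^^ m) i | m. True} \<union> {(tau_inv V \<tau> ^^ m) i | m. True}"

definition complete_tau_slice :: "'v set \<Rightarrow> 'a set \<Rightarrow> ('a \<Rightarrow> 'v) \<Rightarrow> ('a \<Rightarrow> 'v)
    \<Rightarrow> ('v \<Rightarrow> 'v) \<Rightarrow> 'v set \<Rightarrow> bool" where
  "complete_tau_slice V Arr s t \<tau> S \<longleftrightarrow> S \<subseteq> V
     \<and> (\<forall>i\<in>V. \<exists>!x. x \<in> S \<and> x \<in> tau_orbit V \<tau> i)
     \<and> (\<forall>p. is_path V Arr s t p \<and> psrc p \<in> S \<and> ptgt t p \<in> S \<longrightarrow> pverts t p \<subseteq> S)"

definition is_sink_of :: "'a set \<Rightarrow> ('a \<Rightarrow> 'v) \<Rightarrow> ('a \<Rightarrow> 'v) \<Rightarrow> 'v set \<Rightarrow> 'v \<Rightarrow> bool" where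
  "is_sink_of Arr s t S j \<longleftrightarrow> j \<in> S \<and> \<not> (\<exists>\<alpha>\<in>Arr. s \<alpha> = j \<and> t \<alpha> \<in> S)"

definition is_source_of :: "'a set \<Rightarrow> ('a \<Rightarrow> 'v) \<Rightarrow> ('a \<Rightarrow> 'v) \<Rightarrow> 'v set \<Rightarrow> 'v \<Rightarrow> bool" where
  "is_source_of Arr s t S j \<longleftrightarrow> j \<in> S \<and> \<not> (\<exists>\<alpha>\<in>Arr. t \<alpha> = j \<and> s \<alpha> \<in> S)"

definition is_walk :: "'v set \<Rightarrow> 'a set \<Rightarrow> ('a \<Rightarrow> 'v) \<Rightarrow> ('a \<Rightarrow> 'v)
    \<Rightarrow> ('v,'a) path list \<Rightarrow> 'v \<Rightarrow> 'v \<Rightarrow> bool" where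
  "is_walk V Arr s t w a b \<longleftrightarrow> w \<noteq> []
     \<and> (\<forall>p\<in>set w. is_path V Arr s t p)
     \<and> (\<forall>h. 0 < h \<and> h < length w - 1 \<longrightarrow> plen (w ! h) > 0)
     \<and> (\<forall>h. 2 * h + 1 < length w \<longrightarrow> ptgt t (w ! (2 * h)) = ptgt t (w ! (2 * h + 1)))
     \<and> (\<forall>h. 2 * h + 2 < length w \<longrightarrow> psrc (w ! (2 * h + 1)) = psrc (w ! (2 * h + 2)))
     \<and> psrc (w ! 0) = a
     \<and> b = (if even (length w - 1) then ptgt t (last w) else psrc (last w))"

definition walk_in :: "'v set \<Rightarrow> 'a set \<Rightarrow> ('a \<Rightarrow> 'v) \<Rightarrow> ('a \<Rightarrow> 'v) \<Rightarrow> 'v set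
    \<Rightarrow> ('v,'a) path list \<Rightarrow> 'v \<Rightarrow> 'v \<Rightarrow> bool" where
  "walk_in V Arr s t S w a b \<longleftrightarrow> is_walk V Arr s t w a b \<and> (\<forall>p\<in>set w. pverts t p \<subseteq> S)"

definition walk_sinks :: "('a \<Rightarrow> 'v) \<Rightarrow> ('v,'a) path list \<Rightarrow> 'v set" where
  "walk_sinks t w = {ptgt t (w ! (2 * h)) | h. 2 * h + 1 < length w}"

definition walk_sources :: "('v,'a) path list \<Rightarrow> 'v set" where
  "walk_sources w = {psrc (w ! (2 * h + 1)) | h. 2 * h + 2 < length w}"

definition walk_grade :: "('v,'a) path list \<Rightarrow> int" where
  "walk_grade w = (\<Sum>h<length w. (-1) ^ h * int (plen (w ! h)))"

end

theory Submission
  imports Defs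
begin

text \<open>
  Let \<open>j\<close> be a sink of the slice \<open>Q\<close>. By convexity every path of \<open>Q\<close> through \<open>j\<close>
  ends at \<open>j\<close>, so the paths of the walk \<open>w\<close> that meet \<open>j\<close> come in pairs
  \<open>p\<^sub>0 = \<alpha>\<^sub>0 q\<^sub>0\<close>, \<open>p\<^sub>1 = \<alpha>\<^sub>1 q\<^sub>1\<close> forming a sink of \<open>w\<close> at \<open>j\<close>, where
  \<open>\<alpha>\<^sub>k : x\<^sub>k \<rightarrow> j\<close> are arrows. Self-injectivity extends each \<open>\<alpha>\<^sub>k\<close> to a bound path
  \<open>\<alpha>\<^sub>k P\<^sub>k\<close> of length \<open>n + 1\<close>, which therefore starts at \<open>\<tau> j\<close>; convexity of \<open>Q\<close>
  and the fact that \<open>j\<close> is a sink force \<open>P\<^sub>k\<close> into \<open>s\<^sub>j\<^sup>- Q\<close>. Replacing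
  \<open>p\<^sub>0, p\<^sub>1\<close> by \<open>q\<^sub>0, P\<^sub>0, P\<^sub>1, q\<^sub>1\<close> turns the sink \<open>j\<close> into the source \<open>\<tau> j\<close> and
  changes the grade by \<open>(1 - 1) - (n - n) = 0\<close>. After all pairs are replaced, trivial
  interior paths are removed by composing their neighbours.

  Part (2) is part (1) for the opposite quiver, where \<open>\<tau>\<inverse>\<close> plays the role of \<open>\<tau>\<close>.
\<close>

section \<open>Paths\<close>

lemma chain_append:
  "chain s t v (as @ bs) \<longleftrightarrow> chain s t v as \<and> chain s t (ptgt t (v, as)) bs"
  by (induction as arbitrary: v) (auto simp: ptgt_def)

lemma ptgt_Cons: "ptgt t (v, \<alpha> # as) = ptgt t (t \<alpha>, as)"
  by (simp add: ptgt_def)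

lemma psrc_in_pverts: "psrc p \<in> pverts t p"
  by (simp add: psrc_def pverts_def)

lemma ptgt_in_pverts: "ptgt t p \<in> pverts t p"
  by (auto simp: ptgt_def pverts_def)

lemma ptgt_trivial: "plen p = 0 \<Longrightarrow> ptgt t p = psrc p"
  by (simp add: plen_def ptgt_def psrc_def)

lemma pverts_trivial: "plen p = 0 \<Longrightarrow> pverts t p = {psrc p}"
  by (simp add: plen_def pverts_def psrc_def)

lemma psrc_pcomp [simp]: "psrc (pcomp q r) = psrc r"
  by (simp add: psrc_def pcomp_def)

lemma plen_pcomp [simp]: "plen (pcomp q r) = plen q + plen r"
  by (simp add: plen_def pcomp_def)

lemma ptgt_pcomp: "ptgt t r = psrc q \<Longrightarrow> ptgt t (pcomp q r) = ptgt t q"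
  by (auto simp: ptgt_def psrc_def pcomp_def)

lemma pcomp_assoc: "pcomp q (pcomp r p) = pcomp (pcomp q r) p"
  by (simp add: pcomp_def)

lemma is_path_pcomp:
  "is_path V Arr s t q \<Longrightarrow> is_path V Arr s t r \<Longrightarrow> ptgt t r = psrc q \<Longrightarrow> is_path V Arr s t (pcomp q r)"
  by (cases q, cases r) (auto simp: is_path_def pcomp_def chain_append psrc_def)

lemma pverts_pcomp:
  "ptgt t r = psrc q \<Longrightarrow> pverts t (pcomp q r) = pverts t q \<union> pverts t r"
  using ptgt_in_pverts[of t r]
  by (cases q, cases r) (auto simp: pverts_def pcomp_def psrc_def)

lemma is_path_trivial: "v \<in> V \<Longrightarrow> is_path V Arr s t (v, [])"
  by (simp add: is_path_def)

lemma pverts_subset_V: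
  "is_path V Arr s t p \<Longrightarrow> \<forall>\<alpha>\<in>Arr. t \<alpha> \<in> V \<Longrightarrow> pverts t p \<subseteq> V"
  by (auto simp: is_path_def pverts_def)

lemma is_path_split:
  assumes "is_path V Arr s t p" "v \<in> pverts t p" "\<forall>\<alpha>\<in>Arr. t \<alpha> \<in> V"
  obtains p1 p2 where "p = pcomp p2 p1" "is_path V Arr s t p1" "is_path V Arr s t p2"
    "ptgt t p1 = v" "psrc p2 = v"
proof (cases "v = fst p")
  case True
  then show ?thesis
    using assms that[of p "(fst p, [])"]
    by (cases p) (auto simp: pcomp_def ptgt_def psrc_def is_path_def)
next
  case False
  then obtain \<gamma> as1 as2 where sp: "snd p = as1 @ \<gamma> # as2" "v = t \<gamma>"
    using assms(2) by (auto simp: pverts_def dest: split_list)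
  have "\<gamma> \<in> Arr" using assms(1) sp by (auto simp: is_path_def)
  then show ?thesis
    using assms(1,3) sp that[of "(t \<gamma>, as2)" "(fst p, as1 @ [\<gamma>])"]
    by (cases p) (auto simp: is_path_def chain_append pcomp_def ptgt_def psrc_def)
qed

(* The reverse of a path of the quiver (s, t), read in the opposite quiver (t, s). *)
definition rev_path :: "('a \<Rightarrow> 'v) \<Rightarrow> ('v,'a) path \<Rightarrow> ('v,'a) path" where
  "rev_path t p = (ptgt t p, rev (snd p))"

lemma chain_rev: "chain s t v as \<Longrightarrow> chain t s (ptgt t (v, as)) (rev as)"
  by (induction as rule: rev_induct) (auto simp: chain_append ptgt_def)

lemma chain_pverts:
  "chain s t v as \<Longrightarrow> insert v (t ` set as) = insert (ptgt t (v, as)) (s ` set as)"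
  by (induction as arbitrary: v) (auto simp: ptgt_Cons, auto simp: ptgt_def)

lemma psrc_rev_path [simp]: "psrc (rev_path t p) = ptgt t p"
  by (simp add: rev_path_def psrc_def)

lemma plen_rev_path [simp]: "plen (rev_path t p) = plen p"
  by (simp add: rev_path_def plen_def)

context
  fixes V Arr and s t :: "'a \<Rightarrow> 'v" and p :: "('v,'a) path"
  assumes p: "is_path V Arr s t p"
begin

lemma ptgt_rev_path: "ptgt s (rev_path t p) = psrc p"
  using p by (cases p; cases "snd p") (auto simp: rev_path_def ptgt_def psrc_def is_path_def last_rev)

lemma pverts_rev_path: "pverts s (rev_path t p) = pverts t p"
  using p chain_pverts[of s t "fst p" "snd p"] by (simp add: rev_path_def pverts_def is_path_def)

lemma rev_rev_path: "rev_path s (rev_path t p) = p"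
  using ptgt_rev_path by (simp add: rev_path_def psrc_def)

lemma is_path_rev_path: "\<forall>\<alpha>\<in>Arr. t \<alpha> \<in> V \<Longrightarrow> is_path V Arr t s (rev_path t p)"
  using p pverts_subset_V[OF p] ptgt_in_pverts[of t p] chain_rev[of s t "fst p" "snd p"]
  by (auto simp: is_path_def rev_path_def)

end

lemma rev_path_pcomp:
  "ptgt t p = psrc q \<Longrightarrow> rev_path t (pcomp q p) = pcomp (rev_path t p) (rev_path t q)"
  using ptgt_pcomp[of t p q] by (simp add: rev_path_def pcomp_def)

lemma is_sink_of_opposite: "is_sink_of Arr t s S j = is_source_of Arr s t S j"
  by (simp add: is_sink_of_def is_source_of_def)

lemma sink_path_ends_at_sink:
  assumes sink: "is_sink_of Arr s t S j" and p: "is_path V Arr s t p" "pverts t p \<subseteq> S" "j \<in> pverts t p"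
  shows "ptgt t p = j"
proof -
  have "ptgt t (v, as) = j"
    if "chain s t v as" "set as \<subseteq> Arr" "insert v (t ` set as) \<subseteq> S" "j \<in> insert v (t ` set as)" for v as
    using that
  proof (induction as arbitrary: v)
    case (Cons \<alpha> as)
    then have "v \<noteq> j"
      using sink by (auto simp: is_sink_of_def)
    with Cons show ?case
      by (auto simp: ptgt_Cons)
  qed (simp add: ptgt_def)
  then show ?thesis
    using p by (cases p) (auto simp: is_path_def pverts_def)
qed

lemma sink_path_last_arrow:
  assumes sink: "is_sink_of Arr s t S j"
    and p: "is_path V Arr s t p" "pverts t p \<subseteq> S" "ptgt t p = j" "0 < plen p"
  obtains q \<alpha> where "p = pcomp (ptgt t q, [\<alpha>]) q" "is_path V Arr s t q" "\<alpha> \<in> Arr"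
    "s \<alpha> = ptgt t q" "t \<alpha> = j" "pverts t q \<subseteq> S - {j}"
proof -
  obtain v bs \<alpha> where p_eq: "p = (v, bs @ [\<alpha>])"
    using p(4) by (cases p; cases "snd p" rule: rev_cases) (auto simp: plen_def)
  let ?q = "(v, bs)"
  have q: "is_path V Arr s t ?q" "\<alpha> \<in> Arr" "s \<alpha> = ptgt t ?q" "t \<alpha> = j"
    using p(1,3) by (auto simp: p_eq is_path_def chain_append ptgt_def)
  have "pverts t ?q \<subseteq> S"
    using p(2) by (auto simp: p_eq pverts_def)
  moreover have "j \<notin> pverts t ?q"
  proof
    assume "j \<in> pverts t ?q"
    then have "s \<alpha> = j"
      using sink_path_ends_at_sink[OF sink q(1) \<open>pverts t ?q \<subseteq> S\<close>] q by simp
    then show False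
      using sink q \<open>pverts t ?q \<subseteq> S\<close> p(2,3) ptgt_in_pverts[of t p] by (auto simp: is_sink_of_def)
  qed
  ultimately show thesis
    using that[of ?q \<alpha>] q by (auto simp: p_eq pcomp_def)
qed

section \<open>The path algebra and bound paths\<close>

definition factorizations :: "'v set \<Rightarrow> 'a set \<Rightarrow> ('a \<Rightarrow> 'v) \<Rightarrow> ('a \<Rightarrow> 'v) \<Rightarrow> ('v,'a) path
    \<Rightarrow> (('v,'a) path \<times> ('v,'a) path) set" where
  "factorizations V Arr s t w = {(q,r). is_path V Arr s t q \<and> is_path V Arr s t r
      \<and> ptgt t r = psrc q \<and> pcomp q r = w}"

lemma pmult_factorizations:
  "pmult V Arr s t x y w = (\<Sum>(q,r)\<in>factorizations V Arr s t w. x q * y r)"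
  by (simp add: pmult_def factorizations_def)

lemma finite_factorizations: "finite (factorizations V Arr s t w)"
proof (rule finite_subset)
  show "factorizations V Arr s t w \<subseteq>
      (\<lambda>k. ((ptgt t (fst w, take k (snd w)), drop k (snd w)), (fst w, take k (snd w)))) ` {..length (snd w)}"
  proof
    fix x assume "x \<in> factorizations V Arr s t w"
    then obtain q r where x: "x = (q,r)" and "ptgt t r = psrc q" "pcomp q r = w"
      by (auto simp: factorizations_def)
    then have "fst r = fst w" "snd w = snd r @ snd q" "fst q = ptgt t r"
      by (auto simp: pcomp_def psrc_def)
    with x show "x \<in> (\<lambda>k. ((ptgt t (fst w, take k (snd w)), drop k (snd w)), (fst w, take k (snd w)))) ` {..length (snd w)}"
      by (intro image_eqI[where x="length (snd r)"]) (auto simp: prod_eq_iff ptgt_def)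
  qed
qed simp

lemma pmult_assoc:
  "pmult V Arr s t (pmult V Arr s t x y) z = pmult V Arr s t x (pmult V Arr s t y z)"
proof
  fix w
  let ?path = "is_path V Arr s t" and ?F = "factorizations V Arr s t"
  let ?T = "{(a,b,c). ?path a \<and> ?path b \<and> ?path c \<and> ptgt t c = psrc b \<and> ptgt t b = psrc a
     \<and> pcomp a (pcomp b c) = w}"
  have "pmult V Arr s t (pmult V Arr s t x y) z w = (\<Sum>(q,r)\<in>?F w. \<Sum>(a,b)\<in>?F q. x a * y b * z r)"
    by (simp add: pmult_factorizations sum_distrib_right case_prod_beta)
  also have "\<dots> = (\<Sum>((q,r),(a,b))\<in>Sigma (?F w) (\<lambda>(q,r). ?F q). x a * y b * z r)"
    by (simp add: sum.Sigma finite_factorizations split_def)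
  also have "\<dots> = (\<Sum>(a,b,c)\<in>?T. x a * y b * z c)"
    by (rule sum.reindex_bij_witness[where i = "\<lambda>(a,b,c). ((pcomp a b, c), (a,b))"
          and j = "\<lambda>((q,r),(a,b)). (a,b,r)"])
      (auto simp: factorizations_def pcomp_assoc ptgt_pcomp intro: is_path_pcomp, metis psrc_pcomp)
  also have "\<dots> = (\<Sum>((a,u),(b,c))\<in>Sigma (?F w) (\<lambda>(a,u). ?F u). x a * y b * z c)"
    by (rule sum.reindex_bij_witness[where i = "\<lambda>((a,u),(b,c)). (a,b,c)"
          and j = "\<lambda>(a,b,c). ((a, pcomp b c), (b,c))"])
      (auto simp: factorizations_def ptgt_pcomp intro: is_path_pcomp, metis ptgt_pcomp)
  also have "\<dots> = (\<Sum>(a,u)\<in>?F w. \<Sum>(b,c)\<in>?F u. x a * y b * z c)"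
    by (simp add: sum.Sigma finite_factorizations split_def)
  also have "\<dots> = pmult V Arr s t x (pmult V Arr s t y z) w"
    by (simp add: pmult_factorizations sum_distrib_left case_prod_beta mult.assoc)
  finally show "pmult V Arr s t (pmult V Arr s t x y) z w = pmult V Arr s t x (pmult V Arr s t y z) w" .
qed

lemma pmult_add_left:
  "pmult V Arr s t (\<lambda>w. x w + y w) c = (\<lambda>w. pmult V Arr s t x c w + pmult V Arr s t y c w)"
  by (rule ext) (simp add: pmult_factorizations sum.distrib distrib_right case_prod_beta)

lemma pmult_add_right:
  "pmult V Arr s t c (\<lambda>w. x w + y w) = (\<lambda>w. pmult V Arr s t c x w + pmult V Arr s t c y w)"
  by (rule ext) (simp add: pmult_factorizations sum.distrib distrib_left case_prod_beta)

lemma pmult_zero_left [simp]: "pmult V Arr s t (\<lambda>_. 0) c = (\<lambda>_. 0)"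
  by (rule ext) (simp add: pmult_factorizations)

lemma pmult_zero_right [simp]: "pmult V Arr s t c (\<lambda>_. 0) = (\<lambda>_. 0)"
  by (rule ext) (simp add: pmult_factorizations)

lemma is_elem_pmult:
  assumes x: "is_elem V Arr s t x" and y: "is_elem V Arr s t y"
  shows "is_elem V Arr s t (pmult V Arr s t x y)"
proof -
  let ?supp = "\<lambda>x. {q. x q \<noteq> 0}"
  have factor: "\<exists>q r. (q,r) \<in> factorizations V Arr s t w \<and> x q \<noteq> 0 \<and> y r \<noteq> 0"
    if nz: "pmult V Arr s t x y w \<noteq> 0" for w
  proof -
    obtain z where "z \<in> factorizations V Arr s t w" "(case z of (q,r) \<Rightarrow> x q * y r) \<noteq> 0"
      using sum.not_neutral_contains_not_neutral[OF nz[unfolded pmult_factorizations]] by blast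
    then show ?thesis by (cases z) auto
  qed
  have "?supp (pmult V Arr s t x y) \<subseteq> (\<lambda>(q,r). pcomp q r) ` (?supp x \<times> ?supp y)"
  proof
    fix w assume "w \<in> ?supp (pmult V Arr s t x y)"
    then obtain q r where "(q,r) \<in> factorizations V Arr s t w" "x q \<noteq> 0" "y r \<noteq> 0"
      using factor by blast
    then show "w \<in> (\<lambda>(q,r). pcomp q r) ` (?supp x \<times> ?supp y)"
      by (auto simp: factorizations_def)
  qed
  moreover have "finite (?supp x \<times> ?supp y)"
    using x y by (simp add: is_elem_def)
  ultimately have "finite (?supp (pmult V Arr s t x y))"
    by (rule finite_subset[OF _ finite_imageI])
  moreover have "is_path V Arr s t w" if "pmult V Arr s t x y w \<noteq> 0" for w
    using factor[OF that] by (auto simp: factorizations_def intro: is_path_pcomp)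
  ultimately show ?thesis
    by (simp add: is_elem_def)
qed

lemma rel_ideal_pmult_right:
  assumes "x \<in> rel_ideal V Arr s t \<rho>" "is_elem V Arr s t c"
  shows "pmult V Arr s t x c \<in> rel_ideal V Arr s t \<rho>"
  using assms(1)
proof induction
  case (step x r a b)
  then show ?case
    using rel_ideal.step[OF step.IH step.hyps(2,3) is_elem_pmult[OF step.hyps(4) assms(2)]]
    by (simp add: pmult_add_left pmult_assoc)
qed (simp add: rel_ideal.zero)

lemma rel_ideal_pmult_left:
  assumes "x \<in> rel_ideal V Arr s t \<rho>" "is_elem V Arr s t c"
  shows "pmult V Arr s t c x \<in> rel_ideal V Arr s t \<rho>"
  using assms(1)
proof induction
  case (step x r a b)
  then show ?case
    using rel_ideal.step[OF step.IH step.hyps(2) is_elem_pmult[OF assms(2) step.hyps(3)] step.hyps(4)]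
    by (simp add: pmult_add_right pmult_assoc)
qed (simp add: rel_ideal.zero)

lemma is_elem_single: "is_path V Arr s t p \<Longrightarrow> is_elem V Arr s t (single p)"
  by (simp add: is_elem_def single_def)

lemma single_mult_single:
  "pmult V Arr s t (single q) (single p) =
    (if is_path V Arr s t q \<and> is_path V Arr s t p \<and> ptgt t p = psrc q
     then single (pcomp q p) else (\<lambda>_. 0))"
proof
  fix w
  have "pmult V Arr s t (single q) (single p) w
      = (\<Sum>z\<in>factorizations V Arr s t w. if (q,p) = z then 1 else 0)"
    unfolding pmult_factorizations by (rule sum.cong) (auto simp: single_def split: if_splits)
  also have "\<dots> = (if (q,p) \<in> factorizations V Arr s t w then 1 else 0)"
    by (simp add: finite_factorizations)
  finally show "pmult V Arr s t (single q) (single p) w = (if is_path V Arr s t q \<and> is_path V Arr s t p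
      \<and> ptgt t p = psrc q then single (pcomp q p) else (\<lambda>_. 0)) w"
    by (auto simp: finite_factorizations factorizations_def single_def)
qed

lemma pmult_vanishes_left:
  assumes "\<And>u. plen u < d \<Longrightarrow> x u = 0" "plen w < d"
  shows "pmult V Arr s t x y w = 0"
  unfolding pmult_factorizations
  by (rule sum.neutral) (use assms in \<open>auto simp: factorizations_def\<close>)

lemma pmult_vanishes_right:
  assumes "\<And>u. plen u < d \<Longrightarrow> y u = 0" "plen w < d"
  shows "pmult V Arr s t x y w = 0"
  unfolding pmult_factorizations
  by (rule sum.neutral) (use assms in \<open>auto simp: factorizations_def\<close>)

lemma rel_ideal_vanishes_short:
  assumes "x \<in> rel_ideal V Arr s t \<rho>" "\<forall>r\<in>\<rho>. is_relation V Arr s t r" "plen w < 2"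
  shows "x w = 0"
  using assms(1,3)
proof (induction arbitrary: w)
  case (step x r a b)
  have r: "r u = 0" if "plen u < 2" for u
    using assms(2) step.hyps(2) that unfolding is_relation_def by fastforce
  have "pmult V Arr s t r b u = 0" if "plen u < 2" for u
    by (rule pmult_vanishes_left[of 2]) (use r that in auto)
  then have "pmult V Arr s t a (pmult V Arr s t r b) w = 0"
    by (rule pmult_vanishes_right[of 2]) (use step.prems in auto)
  then show ?case
    using step.IH[OF step.prems] by simp
qed simp

lemma bound_path_short:
  assumes "\<forall>r\<in>\<rho>. is_relation V Arr s t r" "is_path V Arr s t p" "plen p < 2"
  shows "bound_path V Arr s t \<rho> p"
  using rel_ideal_vanishes_short[OF _ assms(1,3), of "single p"] assms(2)
  by (auto simp: bound_path_def single_def)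

lemma bound_path_pcomp_dest:
  fixes \<rho> :: "(('v,'a) path \<Rightarrow> 'k::field) set"
  assumes "bound_path V Arr s t \<rho> (pcomp q p)"
    and paths: "is_path V Arr s t q" "is_path V Arr s t p" "ptgt t p = psrc q"
  shows "bound_path V Arr s t \<rho> q \<and> bound_path V Arr s t \<rho> p"
proof -
  have prod: "pmult V Arr s t (single q) (single p) = (single (pcomp q p) :: ('v,'a) path \<Rightarrow> 'k)"
    using paths by (simp add: single_mult_single)
  have "single q \<notin> rel_ideal V Arr s t \<rho>"
    using rel_ideal_pmult_right[of "single q" V Arr s t \<rho> "single p"] assms
    by (auto simp: bound_path_def prod is_elem_single)
  moreover have "single p \<notin> rel_ideal V Arr s t \<rho>"
    using rel_ideal_pmult_left[of "single p" V Arr s t \<rho> "single q"] assms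
    by (auto simp: bound_path_def prod is_elem_single)
  ultimately show ?thesis
    using paths by (simp add: bound_path_def)
qed

lemma single_hom_part:
  "is_path V Arr s t p \<Longrightarrow> single p \<in> hom_part V Arr s t (psrc p) (ptgt t p) (plen p)"
  by (auto simp: hom_part_def is_elem_single) (auto simp: single_def split: if_splits)

context
  fixes V Arr s t and \<rho> :: "(('v,'a) path \<Rightarrow> 'k::field) set" and n \<tau>
  assumes st: "stable_ntq V Arr s t \<rho> n \<tau>"
begin

lemma bound_path_extend_target:
  assumes b: "bound_path V Arr s t \<rho> p" and l: "plen p \<le> n + 1"
  shows "\<exists>q. is_path V Arr s t q \<and> psrc q = ptgt t p \<and> plen q = n + 1 - plen p
      \<and> bound_path V Arr s t \<rho> (pcomp q p)"
proof -
  have p: "is_path V Arr s t p" "single p \<notin> rel_ideal V Arr s t \<rho>"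
    using b by (auto simp: bound_path_def)
  then obtain q where q: "is_path V Arr s t q" "psrc q = ptgt t p" "plen q = n + 1 - plen p"
    "pmult V Arr s t (single q) (single p) \<notin> rel_ideal V Arr s t \<rho>"
    using st l single_hom_part[OF p(1)] unfolding stable_ntq_def by blast
  then show ?thesis
    using p rel_ideal.zero
    by (intro exI[of _ q]) (auto simp: bound_path_def single_mult_single is_path_pcomp split: if_splits)
qed

lemma bound_path_extend_source:
  assumes b: "bound_path V Arr s t \<rho> p" and l: "plen p \<le> n + 1"
  shows "\<exists>q. is_path V Arr s t q \<and> ptgt t q = psrc p \<and> plen q = n + 1 - plen p
      \<and> bound_path V Arr s t \<rho> (pcomp p q)"
proof -
  have p: "is_path V Arr s t p" "single p \<notin> rel_ideal V Arr s t \<rho>"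
    using b by (auto simp: bound_path_def)
  then obtain q where q: "is_path V Arr s t q" "ptgt t q = psrc p" "plen q = n + 1 - plen p"
    "pmult V Arr s t (single p) (single q) \<notin> rel_ideal V Arr s t \<rho>"
    using st l single_hom_part[OF p(1)] unfolding stable_ntq_def by blast
  then show ?thesis
    using p rel_ideal.zero
    by (intro exI[of _ q]) (auto simp: bound_path_def single_mult_single is_path_pcomp split: if_splits)
qed

end

section \<open>Slices of stable translation quivers\<close>

lemma tau_inv_funpow_tau_inv:
  assumes "bij_betw \<tau> V V" "x \<in> V"
  shows "(tau_inv V (tau_inv V \<tau>) ^^ m) x = (\<tau> ^^ m) x"
proof (induction m)
  case (Suc m)
  have "(\<tau> ^^ m) x \<in> V"
    using assms by (induction m) (auto simp: bij_betw_def)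
  then show ?case
    using Suc assms(1) by (simp add: tau_inv_def inv_into_inv_into_eq)
qed simp

lemma tau_orbit_tau_inv:
  "bij_betw \<tau> V V \<Longrightarrow> x \<in> V \<Longrightarrow> tau_orbit V (tau_inv V \<tau>) x = tau_orbit V \<tau> x"
  by (auto simp: tau_orbit_def tau_inv_funpow_tau_inv)

(* The properties of bound paths used in the argument; unlike stable_ntq they are
   preserved by passing to the opposite quiver (stable_slice_opposite). *)
locale stable_slice =
  fixes V :: "'v set" and Arr :: "'a set" and s t :: "'a \<Rightarrow> 'v"
    and bound :: "('v,'a) path \<Rightarrow> bool" and n :: nat and \<tau> :: "'v \<Rightarrow> 'v" and S :: "'v set"
  assumes arrow_ends: "\<alpha> \<in> Arr \<Longrightarrow> s \<alpha> \<in> V \<and> t \<alpha> \<in> V"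
    and tau_bij: "bij_betw \<tau> V V"
    and acyclic: "acyclic_quiver V Arr s t"
    and slice: "complete_tau_slice V Arr s t \<tau> S"
    and bound_is_path: "bound p \<Longrightarrow> is_path V Arr s t p"
    and bound_short: "is_path V Arr s t p \<Longrightarrow> plen p < 2 \<Longrightarrow> bound p"
    and bound_pcomp_dest: "bound (pcomp q p) \<Longrightarrow> is_path V Arr s t q \<Longrightarrow> is_path V Arr s t p
      \<Longrightarrow> ptgt t p = psrc q \<Longrightarrow> bound q \<and> bound p"
    and bound_extend_source: "bound p \<Longrightarrow> plen p \<le> n + 1 \<Longrightarrow>
      \<exists>q. is_path V Arr s t q \<and> ptgt t q = psrc p \<and> plen q = n + 1 - plen p \<and> bound (pcomp p q)"
    and bound_extend_target: "bound p \<Longrightarrow> plen p \<le> n + 1 \<Longrightarrow>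
      \<exists>q. is_path V Arr s t q \<and> psrc q = ptgt t p \<and> plen q = n + 1 - plen p \<and> bound (pcomp q p)"
    and bound_top: "bound p \<Longrightarrow> plen p = n + 1 \<Longrightarrow> psrc p = \<tau> (ptgt t p)"

lemma stable_slice_bound_paths:
  assumes "stable_ntq V Arr s t \<rho> n \<tau>" "acyclic_quiver V Arr s t" "complete_tau_slice V Arr s t \<tau> S"
  shows "stable_slice V Arr s t (bound_path V Arr s t \<rho>) n \<tau> S"
proof unfold_locales
  have rel: "\<forall>r\<in>\<rho>. is_relation V Arr s t r"
    using assms(1) by (simp add: stable_ntq_def)
  show "s \<alpha> \<in> V \<and> t \<alpha> \<in> V" if "\<alpha> \<in> Arr" for \<alpha>
    using assms(1) that by (simp add: stable_ntq_def)
  show "bij_betw \<tau> V V"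
    using assms(1) by (simp add: stable_ntq_def)
  show "psrc p = \<tau> (ptgt t p)" if "bound_path V Arr s t \<rho> p" "plen p = n + 1" for p
    using assms(1) that unfolding stable_ntq_def by blast
  show "is_path V Arr s t p" if "bound_path V Arr s t \<rho> p" for p
    using that by (simp add: bound_path_def)
  show "bound_path V Arr s t \<rho> p" if "is_path V Arr s t p" "plen p < 2" for p
    using bound_path_short[OF rel that] .
  show "bound_path V Arr s t \<rho> q \<and> bound_path V Arr s t \<rho> p"
    if "bound_path V Arr s t \<rho> (pcomp q p)" "is_path V Arr s t q" "is_path V Arr s t p"
      "ptgt t p = psrc q" for p q
    using bound_path_pcomp_dest[OF that] .
qed (use assms bound_path_extend_source bound_path_extend_target in blast)+

context stable_slice
begin

lemma ptgt_in_V: "is_path V Arr s t p \<Longrightarrow> ptgt t p \<in> V"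
  using pverts_subset_V ptgt_in_pverts arrow_ends by blast

lemma psrc_in_V: "is_path V Arr s t p \<Longrightarrow> psrc p \<in> V"
  by (simp add: is_path_def psrc_def)

lemma path_trivial_if_closed: "is_path V Arr s t p \<Longrightarrow> psrc p = ptgt t p \<Longrightarrow> plen p = 0"
  using acyclic unfolding acyclic_quiver_def by (metis gr0I)

lemma slice_subset: "S \<subseteq> V"
  using slice by (simp add: complete_tau_slice_def)

lemma slice_convex:
  "is_path V Arr s t p \<Longrightarrow> psrc p \<in> S \<Longrightarrow> ptgt t p \<in> S \<Longrightarrow> pverts t p \<subseteq> S"
  using slice unfolding complete_tau_slice_def by blast

lemma tau_inv_in_V: "x \<in> V \<Longrightarrow> tau_inv V \<tau> x \<in> V"
  using tau_bij by (simp add: tau_inv_def bij_betw_def inv_into_into)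

lemma tau_inv_eq: "y \<in> V \<Longrightarrow> \<tau> y = x \<Longrightarrow> tau_inv V \<tau> x = y"
  using tau_bij by (auto simp: tau_inv_def bij_betw_inv_into_left)

lemma tau_path: "x \<in> V \<Longrightarrow> \<exists>p. is_path V Arr s t p \<and> psrc p = \<tau> x \<and> ptgt t p = x \<and> plen p = n + 1"
proof -
  assume x: "x \<in> V"
  have "bound (x, [])"
    using x by (intro bound_short) (auto simp: is_path_trivial plen_def)
  then obtain q where "is_path V Arr s t q" "ptgt t q = x" "plen q = n + 1" "bound q"
    using bound_extend_source[of "(x, [])"] by (auto simp: plen_def psrc_def pcomp_def)
  then show ?thesis
    using bound_top by blast
qed

lemma tau_neq: "x \<in> V \<Longrightarrow> \<tau> x \<noteq> x"
  using tau_path path_trivial_if_closed by fastforce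

lemma path_from_tau_power: "x \<in> V \<Longrightarrow> \<exists>p. is_path V Arr s t p \<and> psrc p = (\<tau> ^^ m) x \<and> ptgt t p = x"
proof (induction m)
  case 0
  then show ?case
    by (intro exI[of _ "(x, [])"]) (simp add: is_path_trivial psrc_def ptgt_def)
next
  case (Suc m)
  then obtain p where p: "is_path V Arr s t p" "psrc p = (\<tau> ^^ m) x" "ptgt t p = x"
    by blast
  moreover have "(\<tau> ^^ m) x \<in> V"
    using p psrc_in_V by metis
  then obtain q where "is_path V Arr s t q" "psrc q = \<tau> ((\<tau> ^^ m) x)" "ptgt t q = (\<tau> ^^ m) x"
    using tau_path by blast
  ultimately show ?case
    by (intro exI[of _ "pcomp p q"]) (auto intro: is_path_pcomp simp: ptgt_pcomp)
qed

lemma path_to_tau_inv_power: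
  "x \<in> V \<Longrightarrow> \<exists>p. is_path V Arr s t p \<and> psrc p = x \<and> ptgt t p = (tau_inv V \<tau> ^^ m) x"
proof (induction m)
  case 0
  then show ?case
    by (intro exI[of _ "(x, [])"]) (simp add: is_path_trivial psrc_def ptgt_def)
next
  case (Suc m)
  then obtain p where p: "is_path V Arr s t p" "psrc p = x" "ptgt t p = (tau_inv V \<tau> ^^ m) x"
    by blast
  moreover have "tau_inv V \<tau> ((tau_inv V \<tau> ^^ m) x) \<in> V"
    using p ptgt_in_V tau_inv_in_V by metis
  then obtain q where "is_path V Arr s t q" "psrc q = (tau_inv V \<tau> ^^ m) x"
      "ptgt t q = tau_inv V \<tau> ((tau_inv V \<tau> ^^ m) x)"
    using tau_path tau_bij p ptgt_in_V
    by (metis tau_inv_def bij_betw_inv_into_right)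
  ultimately show ?case
    by (intro exI[of _ "pcomp q p"]) (auto intro: is_path_pcomp simp: ptgt_pcomp)
qed

lemma slice_meets_orbit:
  "x \<in> V \<Longrightarrow> \<exists>u\<in>S. (\<exists>m. u = (\<tau> ^^ m) x) \<or> (\<exists>m. u = (tau_inv V \<tau> ^^ m) x)"
  using slice unfolding complete_tau_slice_def tau_orbit_def by blast

lemma tau_notin_slice: "j \<in> S \<Longrightarrow> \<tau> j \<notin> S"
proof
  assume j: "j \<in> S" "\<tau> j \<in> S"
  then have "j \<in> V"
    using slice_subset by blast
  moreover have "\<tau> j \<in> tau_orbit V \<tau> j" "j \<in> tau_orbit V \<tau> j"
    unfolding tau_orbit_def by (auto intro: exI[of _ 0] exI[of _ 1])
  ultimately have "\<tau> j = j"
    using slice j unfolding complete_tau_slice_def by blast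
  with \<open>j \<in> V\<close> show False
    using tau_neq by blast
qed

lemma no_path_from_sink:
  assumes "is_sink_of Arr s t S j" "is_path V Arr s t p" "psrc p = j" "ptgt t p \<in> S"
  shows "plen p = 0"
proof -
  have "pverts t p \<subseteq> S"
    using assms slice_convex by (auto simp: is_sink_of_def)
  then have "ptgt t p = j"
    using sink_path_ends_at_sink assms psrc_in_pverts by metis
  then show ?thesis
    using assms path_trivial_if_closed by simp
qed

lemma bound_path_to_sink_starts_in_slice:
  assumes sink: "is_sink_of Arr s t S j" and P: "bound P" "ptgt t P = j" "plen P \<le> n"
  shows "psrc P \<in> S"
proof -
  let ?v = "psrc P"
  have P_path: "is_path V Arr s t P"
    using P(1) bound_is_path by blast
  have j: "j \<in> S"
    using sink by (simp add: is_sink_of_def)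
  obtain u where u: "u \<in> S" "(\<exists>m. u = (\<tau> ^^ m) ?v) \<or> (\<exists>m. u = (tau_inv V \<tau> ^^ m) ?v)"
    using slice_meets_orbit psrc_in_V[OF P_path] by blast
  then consider m where "u = (\<tau> ^^ m) ?v" | m where "u = (tau_inv V \<tau> ^^ m) (tau_inv V \<tau> ?v)" | "u = ?v"
    by (metis funpow_0 funpow_Suc_right comp_apply not0_implies_Suc)
  then show ?thesis
  proof cases
    case 1
    then obtain U where U: "is_path V Arr s t U" "psrc U = u" "ptgt t U = ?v"
      using path_from_tau_power psrc_in_V[OF P_path] by blast
    then have "pverts t (pcomp P U) \<subseteq> S"
      using P_path u P(2) j by (intro slice_convex) (auto intro: is_path_pcomp simp: ptgt_pcomp)
    then show ?thesis
      using U pverts_pcomp[of t U P] psrc_in_pverts[of P t] by auto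
  next
    case 2
    \<comment> \<open>Extending \<open>P\<close> by \<open>q\<close> to length \<open>n + 1\<close> gives \<open>psrc P = \<tau> (ptgt t q)\<close>, so
      there is a path from the sink \<open>j\<close> via \<open>q\<close> to \<open>u \<in> S\<close>; it must be trivial, but \<open>q\<close> is not.\<close>
    obtain q where q: "is_path V Arr s t q" "psrc q = j" "plen q = n + 1 - plen P" "bound (pcomp q P)"
      using bound_extend_target[OF P(1)] P by auto
    have "?v = \<tau> (ptgt t q)"
      using bound_top[OF q(4)] q P by (simp add: ptgt_pcomp)
    then have "tau_inv V \<tau> ?v = ptgt t q"
      using tau_inv_eq ptgt_in_V[OF q(1)] by simp
    then obtain Y where Y: "is_path V Arr s t Y" "psrc Y = ptgt t q" "ptgt t Y = u"
      using 2 path_to_tau_inv_power ptgt_in_V[OF q(1)] by metis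
    have "plen (pcomp Y q) = 0"
      using Y q u by (intro no_path_from_sink[OF sink]) (auto intro: is_path_pcomp simp: ptgt_pcomp)
    then show ?thesis
      using q P by simp
  next
    case 3
    then show ?thesis
      using u by simp
  qed
qed

lemma mesh_path_to_arrow_source:
  assumes sink: "is_sink_of Arr s t S j" and \<alpha>: "\<alpha> \<in> Arr" "t \<alpha> = j" "s \<alpha> \<in> S"
  shows "\<exists>P. is_path V Arr s t P \<and> psrc P = \<tau> j \<and> ptgt t P = s \<alpha> \<and> plen P = n \<and> 0 < n
    \<and> pverts t P \<subseteq> S - {j} \<union> {\<tau> j}"
proof -
  define A where "A = (s \<alpha>, [\<alpha>])"
  have A: "is_path V Arr s t A" "plen A = 1" "ptgt t A = j" "psrc A = s \<alpha>"
    using \<alpha> arrow_ends by (auto simp: A_def is_path_def plen_def ptgt_def psrc_def)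
  then obtain p where p: "is_path V Arr s t p" "ptgt t p = s \<alpha>" "plen p = n" "bound (pcomp A p)"
    using bound_extend_source[of A] bound_short by auto
  have j: "j \<in> S"
    using sink by (simp add: is_sink_of_def)
  have p_src: "psrc p = \<tau> j"
    using bound_top[OF p(4)] p A by (simp add: ptgt_pcomp)
  have "0 < n"
    using p p_src \<alpha>(3) tau_notin_slice[OF j] ptgt_trivial[of p t] by (metis gr0I)
  \<comment> \<open>A vertex of \<open>p\<close> other than \<open>\<tau> j\<close> starts a bound subpath of \<open>A p\<close> of length at most
    \<open>n\<close> ending at \<open>j\<close>.\<close>
  moreover have "v \<in> S - {j} \<union> {\<tau> j}" if v: "v \<in> pverts t p" for v
  proof -
    obtain p1 p2 where split: "p = pcomp p2 p1" "is_path V Arr s t p1" "is_path V Arr s t p2"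
        "ptgt t p1 = v" "psrc p2 = v"
      using is_path_split[OF p(1) v] arrow_ends by metis
    show ?thesis
    proof (cases "plen p1 = 0")
      case True
      then have "v = psrc p"
        using split(1,4) ptgt_trivial[OF True, of t] by simp
      then show ?thesis
        using p_src by simp
    next
      case False
      define P where "P = pcomp A p2"
      have P: "is_path V Arr s t P" "psrc P = v" "ptgt t P = j" "0 < plen P"
        using A split p by (auto simp: P_def ptgt_pcomp intro: is_path_pcomp)
      have "bound P"
        using bound_pcomp_dest[of P p1] p(4) P split by (simp add: P_def pcomp_assoc)
      moreover have "plen P \<le> n"
        using False p split by (simp add: P_def A)
      ultimately have "v \<in> S"
        using bound_path_to_sink_starts_in_slice[OF sink] P by blast
      moreover have "v \<noteq> j"
        using P path_trivial_if_closed[OF P(1)] by auto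
      ultimately show ?thesis
        by simp
    qed
  qed
  ultimately show ?thesis
    using p p_src by blast
qed

lemma is_path_rev_of_opposite_path: "is_path V Arr t s p \<Longrightarrow> is_path V Arr s t (rev_path s p)"
  by (rule is_path_rev_path) (use arrow_ends in auto)

lemma is_opposite_path_rev_path: "is_path V Arr s t p \<Longrightarrow> is_path V Arr t s (rev_path t p)"
  by (rule is_path_rev_path) (use arrow_ends in auto)

lemma acyclic_opposite: "acyclic_quiver V Arr t s"
  unfolding acyclic_quiver_def
  using path_trivial_if_closed[OF is_path_rev_of_opposite_path] ptgt_rev_path by fastforce

lemma complete_tau_slice_opposite: "complete_tau_slice V Arr t s (tau_inv V \<tau>) S"
proof -
  have orbit: "\<forall>x\<in>V. \<exists>!u. u \<in> S \<and> u \<in> tau_orbit V (tau_inv V \<tau>) x"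
  proof
    fix x assume "x \<in> V"
    then show "\<exists>!u. u \<in> S \<and> u \<in> tau_orbit V (tau_inv V \<tau>) x"
      using slice unfolding complete_tau_slice_def tau_orbit_tau_inv[OF tau_bij \<open>x \<in> V\<close>] by blast
  qed
  have convex: "pverts s p \<subseteq> S" if "is_path V Arr t s p" "psrc p \<in> S" "ptgt s p \<in> S" for p
    using slice_convex[OF is_path_rev_of_opposite_path[OF that(1)]] that
      ptgt_rev_path[OF that(1)] pverts_rev_path[OF that(1)] by simp
  show ?thesis
    using slice_subset orbit convex unfolding complete_tau_slice_def by blast
qed

lemma stable_slice_opposite:
  "stable_slice V Arr t s (\<lambda>p. is_path V Arr t s p \<and> bound (rev_path s p)) n (tau_inv V \<tau>) S"
proof unfold_locales
  show "t \<alpha> \<in> V \<and> s \<alpha> \<in> V" if "\<alpha> \<in> Arr" for \<alpha>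
    using arrow_ends[OF that] by simp
  show "bij_betw (tau_inv V \<tau>) V V"
    using tau_bij by (simp add: tau_inv_def bij_betw_inv_into)
next
  fix p
  assume p: "is_path V Arr t s p \<and> bound (rev_path s p)" "plen p = n + 1"
  then have "ptgt s p = \<tau> (psrc p)" "psrc p \<in> V"
    using bound_top[of "rev_path s p"] ptgt_rev_path[of V Arr t s p]
      ptgt_in_V[OF is_path_rev_of_opposite_path, of p] by simp_all
  then show "psrc p = tau_inv V \<tau> (ptgt s p)"
    using tau_inv_eq by simp
next
  fix p q
  assume "is_path V Arr t s (pcomp q p) \<and> bound (rev_path s (pcomp q p))"
    "is_path V Arr t s q" "is_path V Arr t s p" "ptgt s p = psrc q"
  then show "(is_path V Arr t s q \<and> bound (rev_path s q)) \<and> is_path V Arr t s p \<and> bound (rev_path s p)"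
    using bound_pcomp_dest[of "rev_path s p" "rev_path s q"] is_path_rev_of_opposite_path
      ptgt_rev_path[of V Arr t s q] by (simp add: rev_path_pcomp)
next
  fix p
  assume p: "is_path V Arr t s p \<and> bound (rev_path s p)" "plen p \<le> n + 1"
  then obtain q where q: "is_path V Arr s t q" "psrc q = psrc p" "plen q = n + 1 - plen p"
      "bound (pcomp q (rev_path s p))"
    using bound_extend_target[of "rev_path s p"] ptgt_rev_path[of V Arr t s p] by auto
  show "\<exists>q. is_path V Arr t s q \<and> ptgt s q = psrc p \<and> plen q = n + 1 - plen p
      \<and> is_path V Arr t s (pcomp p q) \<and> bound (rev_path s (pcomp p q))"
    using p q is_opposite_path_rev_path[OF q(1)] ptgt_rev_path[OF q(1)] rev_rev_path[OF q(1)]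
    by (intro exI[of _ "rev_path t q"]) (auto simp: rev_path_pcomp intro: is_path_pcomp)
next
  fix p
  assume p: "is_path V Arr t s p \<and> bound (rev_path s p)" "plen p \<le> n + 1"
  then obtain q where q: "is_path V Arr s t q" "ptgt t q = ptgt s p" "plen q = n + 1 - plen p"
      "bound (pcomp (rev_path s p) q)"
    using bound_extend_source[of "rev_path s p"] by auto
  show "\<exists>q. is_path V Arr t s q \<and> psrc q = ptgt s p \<and> plen q = n + 1 - plen p
      \<and> is_path V Arr t s (pcomp q p) \<and> bound (rev_path s (pcomp q p))"
    using p q is_opposite_path_rev_path[OF q(1)] ptgt_rev_path[OF q(1)] rev_rev_path[OF q(1)]
    by (intro exI[of _ "rev_path t q"]) (auto simp: rev_path_pcomp intro: is_path_pcomp)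
next
  show "acyclic_quiver V Arr t s"
    by (rule acyclic_opposite)
  show "complete_tau_slice V Arr t s (tau_inv V \<tau>) S"
    by (rule complete_tau_slice_opposite)
  show "is_path V Arr t s p" if "is_path V Arr t s p \<and> bound (rev_path s p)" for p
    using that by simp
  show "is_path V Arr t s p \<and> bound (rev_path s p)" if "is_path V Arr t s p" "plen p < 2" for p
    using that bound_short is_path_rev_of_opposite_path by simp
qed

end

section \<open>Walks\<close>

(* The flag says whether the first two paths share their target (True) or their source;
   it alternates along the list. *)
fun zigzag :: "('a \<Rightarrow> 'v) \<Rightarrow> bool \<Rightarrow> ('v,'a) path list \<Rightarrow> bool" where
  "zigzag t b (p # q # w) =
     ((if b then ptgt t p = ptgt t q else psrc p = psrc q) \<and> zigzag t (\<not> b) (q # w))"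
| "zigzag t b _ = True"

fun zigzag_sinks :: "('a \<Rightarrow> 'v) \<Rightarrow> bool \<Rightarrow> ('v,'a) path list \<Rightarrow> 'v set" where
  "zigzag_sinks t b (p # q # w) = (if b then {ptgt t p} else {}) \<union> zigzag_sinks t (\<not> b) (q # w)"
| "zigzag_sinks t b _ = {}"

fun zigzag_sources :: "bool \<Rightarrow> ('v,'a) path list \<Rightarrow> 'v set" where
  "zigzag_sources b (p # q # w) = (if b then {} else {psrc p}) \<union> zigzag_sources (\<not> b) (q # w)"
| "zigzag_sources b _ = {}"

definition walk_end :: "('a \<Rightarrow> 'v) \<Rightarrow> ('v,'a) path list \<Rightarrow> 'v" where
  "walk_end t w = (if even (length w - 1) then ptgt t (last w) else psrc (last w))"

(* is_walk without the requirement that interior paths be nontrivial. *)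
definition prewalk :: "'v set \<Rightarrow> 'a set \<Rightarrow> ('a \<Rightarrow> 'v) \<Rightarrow> ('a \<Rightarrow> 'v)
    \<Rightarrow> ('v,'a) path list \<Rightarrow> 'v \<Rightarrow> 'v \<Rightarrow> bool" where
  "prewalk V Arr s t w a b \<longleftrightarrow> w \<noteq> [] \<and> (\<forall>p\<in>set w. is_path V Arr s t p) \<and> zigzag t True w
     \<and> psrc (hd w) = a \<and> walk_end t w = b"

lemma zigzag_Cons:
  "zigzag t b (p # w) \<longleftrightarrow>
     (w \<noteq> [] \<longrightarrow> (if b then ptgt t p = ptgt t (hd w) else psrc p = psrc (hd w))) \<and> zigzag t (\<not> b) w"
  by (cases w) auto

lemma zigzag_sinks_Cons:
  "zigzag_sinks t b (p # w) = (if b \<and> w \<noteq> [] then {ptgt t p} else {}) \<union> zigzag_sinks t (\<not> b) w"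
  by (cases w) auto

lemma zigzag_sources_Cons:
  "zigzag_sources b (p # w) = (if \<not> b \<and> w \<noteq> [] then {psrc p} else {}) \<union> zigzag_sources (\<not> b) w"
  by (cases w) auto

declare zigzag.simps(1) [simp del] zigzag_sinks.simps(1) [simp del] zigzag_sources.simps(1) [simp del]

declare zigzag_Cons [simp] zigzag_sinks_Cons [simp] zigzag_sources_Cons [simp]

lemma walk_grade_Nil [simp]: "walk_grade [] = 0"
  by (simp add: walk_grade_def)

lemma walk_grade_Cons [simp]: "walk_grade (p # w) = int (plen p) - walk_grade w"
  by (simp add: walk_grade_def sum.lessThan_Suc_shift sum_negf del: sum.lessThan_Suc)

lemma zigzag_append:
  "zigzag t b (xs @ ys) \<longleftrightarrow> zigzag t b xs \<and> zigzag t (b = even (length xs)) ys \<and>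
     (xs \<noteq> [] \<and> ys \<noteq> [] \<longrightarrow> (if b = odd (length xs) then ptgt t (last xs) = ptgt t (hd ys)
                                 else psrc (last xs) = psrc (hd ys)))"
  by (induction xs arbitrary: b) auto

lemma zigzag_sinks_append:
  "zigzag_sinks t b (xs @ ys) = zigzag_sinks t b xs \<union> zigzag_sinks t (b = even (length xs)) ys \<union>
     (if xs \<noteq> [] \<and> ys \<noteq> [] \<and> b = odd (length xs) then {ptgt t (last xs)} else {})"
  by (induction xs arbitrary: b) auto

lemma zigzag_sources_append:
  "zigzag_sources b (xs @ ys) = zigzag_sources b xs \<union> zigzag_sources (b = even (length xs)) ys \<union>
     (if xs \<noteq> [] \<and> ys \<noteq> [] \<and> b = even (length xs) then {psrc (last xs)} else {})"
  by (induction xs arbitrary: b) auto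

lemma walk_grade_append: "walk_grade (xs @ ys) = walk_grade xs + (-1) ^ length xs * walk_grade ys"
  by (induction xs) (auto simp: algebra_simps)

lemma walk_end_append:
  "ys \<noteq> [] \<Longrightarrow> walk_end t (xs @ ys) =
     (if even (length xs + length ys - 1) then ptgt t (last ys) else psrc (last ys))"
  by (simp add: walk_end_def)

lemma zigzag_nth:
  "zigzag t b w \<longleftrightarrow> (\<forall>k < length w - 1.
     if even k = b then ptgt t (w ! k) = ptgt t (w ! Suc k) else psrc (w ! k) = psrc (w ! Suc k))"
proof (induction t b w rule: zigzag.induct)
  case (1 t b p q w)
  then show ?case
    by (simp add: zigzag.simps(1) All_less_Suc2 del: zigzag_Cons)
qed simp_all

lemma zigzag_sinks_nth:
  "x \<in> zigzag_sinks t b w \<longleftrightarrow> (\<exists>k < length w - 1. even k = b \<and> x = ptgt t (w ! k))"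
proof (induction t b w rule: zigzag_sinks.induct)
  case (1 t b p q w)
  then show ?case
    by (simp add: zigzag_sinks.simps(1) Ex_less_Suc2 del: zigzag_sinks_Cons)
qed simp_all

lemma zigzag_sources_nth:
  "x \<in> zigzag_sources b w \<longleftrightarrow> (\<exists>k < length w - 1. even k \<noteq> b \<and> x = psrc (w ! k))"
proof (induction b w rule: zigzag_sources.induct)
  case (1 b p q w)
  then show ?case
    by (simp add: zigzag_sources.simps(1) Ex_less_Suc2 del: zigzag_sources_Cons)
qed simp_all

lemma walk_sinks_eq: "walk_sinks t w = zigzag_sinks t True w"
proof -
  have "(\<exists>h. x = ptgt t (w ! (2 * h)) \<and> 2 * h + 1 < length w) \<longleftrightarrow>
      (\<exists>k < length w - 1. even k \<and> x = ptgt t (w ! k))" for x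
    by (metis evenE dvd_triv_left less_diff_conv)
  then show ?thesis
    by (simp add: walk_sinks_def zigzag_sinks_nth set_eq_iff)
qed

lemma walk_sources_eq: "walk_sources w = zigzag_sources True w"
proof -
  have "(\<exists>h. x = psrc (w ! (2 * h + 1)) \<and> 2 * h + 2 < length w) \<longleftrightarrow>
      (\<exists>k < length w - 1. odd k \<and> x = psrc (w ! k))" for x
    by (metis (no_types, lifting) add.assoc dvd_add_times_triv_left_iff
        even_plus_one_iff less_diff_conv mult.commute oddE one_add_one)
  then show ?thesis
    by (simp add: walk_sources_def zigzag_sources_nth set_eq_iff)
qed

lemma is_walk_iff_prewalk:
  "is_walk V Arr s t w a b \<longleftrightarrow>
     prewalk V Arr s t w a b \<and> (\<forall>h. 0 < h \<and> h < length w - 1 \<longrightarrow> 0 < plen (w ! h))"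
proof -
  have "zigzag t True w \<longleftrightarrow>
      (\<forall>h. 2 * h + 1 < length w \<longrightarrow> ptgt t (w ! (2 * h)) = ptgt t (w ! (2 * h + 1))) \<and>
      (\<forall>h. 2 * h + 2 < length w \<longrightarrow> psrc (w ! (2 * h + 1)) = psrc (w ! (2 * h + 2)))"
    unfolding zigzag_nth by (auto elim!: evenE oddE)
  then show ?thesis
    by (cases w) (auto simp: is_walk_def prewalk_def walk_end_def)
qed

lemma prewalk_merge:
  fixes xs ys :: "('v,'a) path list"
  assumes pw: "prewalk V Arr s t (xs @ [x, p, y] @ ys) a b" and p: "plen p = 0"
  defines "m \<equiv> if even (length xs) then pcomp y x else pcomp x y"
  shows "prewalk V Arr s t (xs @ [m] @ ys) a b
    \<and> walk_grade (xs @ [m] @ ys) = walk_grade (xs @ [x, p, y] @ ys)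
    \<and> pverts t m \<subseteq> pverts t x \<union> pverts t y \<and> (plen m = 0 \<longrightarrow> m = x \<or> m = y)
    \<and> zigzag_sources True (xs @ [x, p, y] @ ys) \<subseteq> insert (psrc p) (zigzag_sources True (xs @ [m] @ ys))
    \<and> zigzag_sinks t True (xs @ [x, p, y] @ ys) \<subseteq> insert (psrc p) (zigzag_sinks t True (xs @ [m] @ ys))"
proof -
  have paths: "is_path V Arr s t x" "is_path V Arr s t y"
    using pw by (auto simp: prewalk_def)
  have zz: "zigzag t True (xs @ [x, p, y] @ ys)"
    using pw by (simp add: prewalk_def)
  have p_tgt: "ptgt t p = psrc p"
    using p by (rule ptgt_trivial)
  have trivial: "plen m = 0 \<longrightarrow> m = x \<or> m = y"
    by (cases x, cases y) (auto simp: m_def pcomp_def plen_def)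
  show ?thesis
  proof (cases "even (length xs)")
    case True
    then have m: "m = pcomp y x" "ptgt t x = psrc p" "psrc y = psrc p"
      using zz p_tgt by (auto simp: m_def zigzag_append)
    then have "is_path V Arr s t m" "psrc m = psrc x" "ptgt t m = ptgt t y"
      using paths by (auto intro: is_path_pcomp simp: ptgt_pcomp)
    then have "prewalk V Arr s t (xs @ [m] @ ys) a b"
      using pw True unfolding prewalk_def
      by (cases "ys = []") (auto simp: zigzag_append walk_end_append hd_append)
    moreover have "zigzag_sources True (xs @ [x, p, y] @ ys) \<subseteq> insert (psrc p) (zigzag_sources True (xs @ [m] @ ys))"
      using True by (auto simp: zigzag_sources_append)
    moreover have "zigzag_sinks t True (xs @ [x, p, y] @ ys) \<subseteq> insert (psrc p) (zigzag_sinks t True (xs @ [m] @ ys))"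
      using True m p_tgt \<open>ptgt t m = ptgt t y\<close> by (auto simp: zigzag_sinks_append)
    ultimately show ?thesis
      using m p trivial by (simp add: walk_grade_append pverts_pcomp)
  next
    case False
    then have m: "m = pcomp x y" "psrc x = psrc p" "ptgt t y = psrc p"
      using zz p_tgt by (auto simp: m_def zigzag_append)
    then have "is_path V Arr s t m" "psrc m = psrc y" "ptgt t m = ptgt t x"
      using paths by (auto intro: is_path_pcomp simp: ptgt_pcomp)
    then have "prewalk V Arr s t (xs @ [m] @ ys) a b"
      using pw False unfolding prewalk_def
      by (cases "ys = []") (auto simp: zigzag_append walk_end_append hd_append)
    moreover have "zigzag_sources True (xs @ [x, p, y] @ ys) \<subseteq> insert (psrc p) (zigzag_sources True (xs @ [m] @ ys))"
      using False m p_tgt \<open>psrc m = psrc y\<close> by (auto simp: zigzag_sources_append)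
    moreover have "zigzag_sinks t True (xs @ [x, p, y] @ ys) \<subseteq> insert (psrc p) (zigzag_sinks t True (xs @ [m] @ ys))"
      using False p_tgt by (auto simp: zigzag_sinks_append)
    ultimately show ?thesis
      using m p trivial by (simp add: walk_grade_append pverts_pcomp)
  qed
qed

lemma prewalk_normalize:
  assumes "prewalk V Arr s t w a b" "\<forall>p\<in>set w. pverts t p \<subseteq> X"
    and "\<forall>p\<in>set w. plen p = 0 \<longrightarrow> psrc p \<noteq> c"
  shows "\<exists>w'. walk_in V Arr s t X w' a b \<and> walk_grade w' = walk_grade w
    \<and> (c \<in> zigzag_sources True w \<longrightarrow> c \<in> walk_sources w')
    \<and> (c \<in> zigzag_sinks t True w \<longrightarrow> c \<in> walk_sinks t w')"
  using assms
proof (induction "length w" arbitrary: w rule: less_induct)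
  case less
  show ?case
  proof (cases "\<forall>h. 0 < h \<and> h < length w - 1 \<longrightarrow> 0 < plen (w ! h)")
    case True
    then show ?thesis
      using less.prems by (auto simp: walk_in_def is_walk_iff_prewalk walk_sources_eq walk_sinks_eq)
  next
    case False
    then obtain h where "0 < h" "h < length w - 1" "plen (w ! h) = 0"
      by auto
    then obtain k where k: "k + 2 < length w" "plen (w ! (k + 1)) = 0"
      by (cases h) (auto simp: less_diff_conv)
    define xs x p y ys where "xs = take k w" and "x = w ! k" and "p = w ! (k + 1)"
      and "y = w ! (k + 2)" and "ys = drop (k + 3) w"
    have w: "w = xs @ [x, p, y] @ ys"
      using k by (simp add: xs_def x_def p_def y_def ys_def Cons_nth_drop_Suc numeral_2_eq_2 numeral_3_eq_3)
    define m where "m = (if even (length xs) then pcomp y x else pcomp x y)"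
    have p: "plen p = 0"
      using k by (simp add: p_def)
    have merge: "prewalk V Arr s t (xs @ [m] @ ys) a b
      \<and> walk_grade (xs @ [m] @ ys) = walk_grade w
      \<and> pverts t m \<subseteq> pverts t x \<union> pverts t y \<and> (plen m = 0 \<longrightarrow> m = x \<or> m = y)
      \<and> zigzag_sources True w \<subseteq> insert (psrc p) (zigzag_sources True (xs @ [m] @ ys))
      \<and> zigzag_sinks t True w \<subseteq> insert (psrc p) (zigzag_sinks t True (xs @ [m] @ ys))"
      using prewalk_merge[OF less.prems(1)[unfolded w] p] unfolding m_def w by simp
    have "psrc p \<noteq> c"
      using less.prems(3) p w by simp
    have verts: "\<forall>q\<in>set (xs @ [m] @ ys). pverts t q \<subseteq> X"
      using less.prems(2) merge w by auto
    have trivial: "\<forall>q\<in>set (xs @ [m] @ ys). plen q = 0 \<longrightarrow> psrc q \<noteq> c"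
      using less.prems(3) merge w by auto
    have "length (xs @ [m] @ ys) < length w"
      using w by simp
    then obtain w' where "walk_in V Arr s t X w' a b" "walk_grade w' = walk_grade (xs @ [m] @ ys)"
      "c \<in> zigzag_sources True (xs @ [m] @ ys) \<longrightarrow> c \<in> walk_sources w'"
      "c \<in> zigzag_sinks t True (xs @ [m] @ ys) \<longrightarrow> c \<in> walk_sinks t w'"
      using less.hyps[OF _ conjunct1[OF merge] verts trivial] by blast
    then show ?thesis
      using merge \<open>psrc p \<noteq> c\<close> by (intro exI[of _ w']) auto
  qed
qed

lemma walk_trivial_paths_avoid:
  assumes w: "is_walk V Arr s t w a b" and "a \<noteq> c" "b \<noteq> c"
  shows "\<forall>p\<in>set w. plen p = 0 \<longrightarrow> psrc p \<noteq> c"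
proof (intro ballI impI)
  fix p assume p: "p \<in> set w" "plen p = 0"
  obtain h where h: "h < length w" "w ! h = p"
    using p(1) by (metis in_set_conv_nth)
  consider "h = 0" | "h = length w - 1" | "0 < h \<and> h < length w - 1"
    using h(1) by linarith
  then show "psrc p \<noteq> c"
  proof cases
    case 1
    then show ?thesis
      using w h assms(2) by (auto simp: is_walk_def)
  next
    case 2
    then have "last w = p"
      using h last_conv_nth[of w] by fastforce
    then have "b = psrc p"
      using w ptgt_trivial[OF p(2), of t] by (simp add: is_walk_def)
    then show ?thesis
      using assms(3) by simp
  next
    case 3
    then show ?thesis
      using w h p(2) by (auto simp: is_walk_def)
  qed
qed

(* w read in the opposite quiver. There consecutive reversed paths first share a source,
   so a trivial path at a is put in front to keep the first junction a sink. *)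
definition opposite_walk :: "('a \<Rightarrow> 'v) \<Rightarrow> 'v \<Rightarrow> ('v,'a) path list \<Rightarrow> ('v,'a) path list" where
  "opposite_walk t a w = (a, []) # map (rev_path t) w"

context
  fixes V Arr and s t :: "'a \<Rightarrow> 'v" and w :: "('v,'a) path list"
  assumes paths: "\<forall>p\<in>set w. is_path V Arr s t p"
begin

lemma zigzag_map_rev_path: "zigzag s b (map (rev_path t) w) \<longleftrightarrow> zigzag t (\<not> b) w"
  using paths
  by (induction w arbitrary: b rule: induct_list012)
    (auto simp: zigzag.simps(1) ptgt_rev_path simp del: zigzag_Cons)

lemma zigzag_sinks_map_rev_path: "zigzag_sinks s b (map (rev_path t) w) = zigzag_sources (\<not> b) w"
  using paths by (induction w arbitrary: b) (auto simp: ptgt_rev_path)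

lemma zigzag_sinks_opposite_walk:
  "w \<noteq> [] \<Longrightarrow> zigzag_sinks s True (opposite_walk t a w) = insert a (zigzag_sources True w)"
  by (simp add: opposite_walk_def zigzag_sinks_map_rev_path ptgt_def)

end

lemma walk_grade_opposite_walk: "walk_grade (opposite_walk t a w) = - walk_grade w"
proof -
  have "walk_grade (map (rev_path t) w) = walk_grade w"
    by (induction w) auto
  then show ?thesis
    by (simp add: opposite_walk_def plen_def)
qed

lemma prewalk_opposite_walk:
  assumes w: "prewalk V Arr s t w a b" and arrows: "\<forall>\<alpha>\<in>Arr. t \<alpha> \<in> V"
  shows "prewalk V Arr t s (opposite_walk t a w) a b"
proof -
  have paths: "\<forall>p\<in>set w. is_path V Arr s t p" and "w \<noteq> []" "psrc (hd w) = a"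
    using w by (auto simp: prewalk_def)
  then have "a \<in> V" "ptgt s (rev_path t (hd w)) = a"
    using ptgt_rev_path[of V Arr s t "hd w"] by (auto simp: is_path_def psrc_def)
  moreover have "zigzag s True (opposite_walk t a w)"
    using w paths \<open>w \<noteq> []\<close> \<open>ptgt s (rev_path t (hd w)) = a\<close>
    by (simp add: opposite_walk_def prewalk_def zigzag_map_rev_path hd_map ptgt_def)
  moreover have "walk_end s (opposite_walk t a w) = b"
    using w \<open>w \<noteq> []\<close> ptgt_rev_path[of V Arr s t "last w"] paths
    by (auto simp: opposite_walk_def prewalk_def walk_end_def last_map)
  moreover have "\<forall>p\<in>set (opposite_walk t a w). is_path V Arr t s p"
    using paths arrows \<open>a \<in> V\<close>
    by (auto simp: opposite_walk_def is_path_trivial intro!: is_path_rev_path)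
  ultimately show ?thesis
    by (simp add: prewalk_def opposite_walk_def psrc_def)
qed

lemma opposite_walk_paths:
  assumes "prewalk V Arr s t w a b" "\<forall>p\<in>set w. pverts t p \<subseteq> X \<and> (plen p = 0 \<longrightarrow> psrc p \<noteq> c)"
    and "a \<in> X" "a \<noteq> c"
  shows "\<forall>p\<in>set (opposite_walk t a w). pverts s p \<subseteq> X \<and> (plen p = 0 \<longrightarrow> psrc p \<noteq> c)"
proof -
  have "pverts s (rev_path t p) \<subseteq> X \<and> (plen p = 0 \<longrightarrow> ptgt t p \<noteq> c)" if "p \<in> set w" for p
    using assms(1,2) that pverts_rev_path[of V Arr s t p] ptgt_trivial[of p t] by (simp add: prewalk_def)
  then show ?thesis
    using assms(3,4) by (auto simp: opposite_walk_def) (auto simp: pverts_def psrc_def)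
qed

lemma prewalk_sink_pair:
  assumes w: "prewalk V Arr s t w a b" and b: "b \<noteq> j" and p: "p \<in> set w" "ptgt t p = j"
  obtains xs p0 p1 ys where "w = xs @ [p0, p1] @ ys" "even (length xs)" "ptgt t p0 = j" "ptgt t p1 = j"
proof -
  obtain k where k: "k < length w" "ptgt t (w ! k) = j"
    using p by (metis in_set_conv_nth)
  have zz: "zigzag t True w"
    using w by (simp add: prewalk_def)
  obtain e where e: "e + 1 < length w" "even e" "ptgt t (w ! e) = j" "ptgt t (w ! (e + 1)) = j"
  proof (cases "even k")
    case True
    have "k + 1 < length w"
    proof (rule ccontr)
      assume "\<not> k + 1 < length w"
      then have last: "k = length w - 1"
        using k by simp
      then have "last w = w ! k"
        using k last_conv_nth[of w] by fastforce
      then show False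
        using w b k True last by (auto simp: prewalk_def walk_end_def)
    qed
    then show ?thesis
      using that[of k] zz k True by (auto simp: zigzag_nth)
  next
    case False
    then obtain e where "k = Suc e"
      by (cases k) auto
    then show ?thesis
      using that[of e] zz k False by (auto simp: zigzag_nth)
  qed
  then show thesis
    using that[of "take e w" "w ! e" "w ! (e + 1)" "drop (e + 2) w"]
    by (simp add: Cons_nth_drop_Suc numeral_2_eq_2)
qed

lemma prewalk_replace_sink_pair:
  assumes w: "prewalk V Arr s t (xs @ [p0, p1] @ ys) a b" and even: "even (length xs)"
    and paths: "is_path V Arr s t q0" "is_path V Arr s t P0" "is_path V Arr s t P1" "is_path V Arr s t q1"
    and ends: "psrc q0 = psrc p0" "ptgt t q0 = ptgt t P0" "psrc P0 = psrc P1" "ptgt t P1 = ptgt t q1"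
      "psrc q1 = psrc p1"
  shows "prewalk V Arr s t (xs @ [q0, P0, P1, q1] @ ys) a b"
    and "zigzag_sources True (xs @ [q0, P0, P1, q1] @ ys)
      = insert (psrc P0) (zigzag_sources True (xs @ [p0, p1] @ ys))"
proof -
  have "zigzag t True xs" "zigzag t True ys" "xs \<noteq> [] \<longrightarrow> psrc (last xs) = psrc p0"
    "ys \<noteq> [] \<longrightarrow> psrc p1 = psrc (hd ys)"
    using w even by (auto simp: prewalk_def zigzag_append)
  then show "prewalk V Arr s t (xs @ [q0, P0, P1, q1] @ ys) a b"
    using w even paths ends unfolding prewalk_def
    by (cases "ys = []"; cases "xs = []") (auto simp: zigzag_append walk_end_def)
  show "zigzag_sources True (xs @ [q0, P0, P1, q1] @ ys)
      = insert (psrc P0) (zigzag_sources True (xs @ [p0, p1] @ ys))"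
    using even ends by (auto simp: zigzag_sources_append)
qed

section \<open>Mutation at a sink\<close>

context stable_slice
begin

(* While pairs are being replaced, every path of the walk is of one of these two kinds. *)
definition mutated_slice_path :: "'v \<Rightarrow> ('v,'a) path \<Rightarrow> bool" where
  "mutated_slice_path j p \<longleftrightarrow> pverts t p \<subseteq> S - {j} \<union> {\<tau> j} \<and> (plen p = 0 \<longrightarrow> psrc p \<noteq> \<tau> j)"

definition slice_path_to :: "'v \<Rightarrow> ('v,'a) path \<Rightarrow> bool" where
  "slice_path_to j p \<longleftrightarrow> pverts t p \<subseteq> S \<and> ptgt t p = j \<and> 0 < plen p"

lemma mutated_slice_path_if_avoids:
  assumes "j \<in> S" "pverts t p \<subseteq> S - {j}"
  shows "mutated_slice_path j p"
proof -
  have "psrc p \<noteq> \<tau> j"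
    using assms(2) psrc_in_pverts[of p t] tau_notin_slice[OF assms(1)] by auto
  then show ?thesis
    using assms(2) by (auto simp: mutated_slice_path_def)
qed

lemma split_path_to_sink:
  assumes sink: "is_sink_of Arr s t S j" and p: "is_path V Arr s t p" "slice_path_to j p"
  obtains q P where "is_path V Arr s t q" "psrc q = psrc p" "plen p = plen q + 1" "pverts t q \<subseteq> S - {j}"
    "is_path V Arr s t P" "psrc P = \<tau> j" "ptgt t P = ptgt t q" "plen P = n" "mutated_slice_path j P"
proof -
  have "pverts t p \<subseteq> S" "ptgt t p = j" "0 < plen p"
    using p(2) by (simp_all add: slice_path_to_def)
  then obtain q \<alpha> where q: "p = pcomp (ptgt t q, [\<alpha>]) q" "is_path V Arr s t q" "\<alpha> \<in> Arr"
      "s \<alpha> = ptgt t q" "t \<alpha> = j" "pverts t q \<subseteq> S - {j}"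
    by (rule sink_path_last_arrow[OF sink p(1)])
  have "s \<alpha> \<in> S"
    using q(4,6) ptgt_in_pverts[of t q] by auto
  then obtain P where "is_path V Arr s t P" "psrc P = \<tau> j" "ptgt t P = s \<alpha>" "plen P = n" "0 < n"
      "pverts t P \<subseteq> S - {j} \<union> {\<tau> j}"
    using mesh_path_to_arrow_source[OF sink q(3,5)] by blast
  moreover have "psrc q = psrc p" "plen p = plen q + 1"
    using q(1) by (simp_all add: plen_def pcomp_def psrc_def)
  ultimately show thesis
    using that[of q P] q by (simp add: mutated_slice_path_def)
qed

lemma replace_sink_pair:
  assumes sink: "is_sink_of Arr s t S j" and w: "prewalk V Arr s t w a b" "b \<noteq> j"
    and inv: "\<forall>p\<in>set w. mutated_slice_path j p \<or> slice_path_to j p"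
    and p: "p \<in> set w" "ptgt t p = j"
  shows "\<exists>w'. prewalk V Arr s t w' a b \<and> (\<forall>p\<in>set w'. mutated_slice_path j p \<or> slice_path_to j p)
    \<and> length (filter (\<lambda>p. ptgt t p = j) w') < length (filter (\<lambda>p. ptgt t p = j) w)
    \<and> walk_grade w' = walk_grade w \<and> zigzag_sources True w' = insert (\<tau> j) (zigzag_sources True w)"
proof -
  have j: "j \<in> S" "\<tau> j \<notin> S"
    using sink tau_notin_slice by (auto simp: is_sink_of_def)
  obtain xs p0 p1 ys where w_eq: "w = xs @ [p0, p1] @ ys" "even (length xs)"
      "ptgt t p0 = j" "ptgt t p1 = j"
    using prewalk_sink_pair[OF w p] .
  have p0: "is_path V Arr s t p0" "slice_path_to j p0" and p1: "is_path V Arr s t p1" "slice_path_to j p1"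
    using w w_eq inv j ptgt_in_pverts[of t p0] ptgt_in_pverts[of t p1]
    by (auto simp: prewalk_def mutated_slice_path_def)
  obtain q0 P0 where
    q0: "is_path V Arr s t q0" "psrc q0 = psrc p0" "plen p0 = plen q0 + 1" "pverts t q0 \<subseteq> S - {j}"
      "is_path V Arr s t P0" "psrc P0 = \<tau> j" "ptgt t P0 = ptgt t q0" "plen P0 = n"
      "mutated_slice_path j P0"
    by (rule split_path_to_sink[OF sink p0])
  obtain q1 P1 where
    q1: "is_path V Arr s t q1" "psrc q1 = psrc p1" "plen p1 = plen q1 + 1" "pverts t q1 \<subseteq> S - {j}"
      "is_path V Arr s t P1" "psrc P1 = \<tau> j" "ptgt t P1 = ptgt t q1" "plen P1 = n"
      "mutated_slice_path j P1"
    by (rule split_path_to_sink[OF sink p1])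
  define w' where "w' = xs @ [q0, P0, P1, q1] @ ys"
  have "ptgt t q0 = ptgt t P0" "psrc P0 = psrc P1"
    using q0 q1 by simp_all
  note splice = prewalk_replace_sink_pair[OF w(1)[unfolded w_eq(1)] w_eq(2) q0(1,5) q1(5,1)
      q0(2) this q1(7) q1(2)]
  have w': "prewalk V Arr s t w' a b" "zigzag_sources True w' = insert (\<tau> j) (zigzag_sources True w)"
    using splice q0(6) unfolding w'_def w_eq(1) by simp_all
  have "\<forall>p\<in>set w'. mutated_slice_path j p \<or> slice_path_to j p"
    using inv q0(4,9) q1(4,9) mutated_slice_path_if_avoids[OF j(1)] by (auto simp: w'_def w_eq)
  moreover have "ptgt t q0 \<noteq> j" "ptgt t q1 \<noteq> j"
    using q0(4) q1(4) ptgt_in_pverts by blast+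
  then have "length (filter (\<lambda>p. ptgt t p = j) w') < length (filter (\<lambda>p. ptgt t p = j) w)"
    using q0(7) q1(7) w_eq by (simp add: w'_def)
  moreover have "walk_grade w' = walk_grade w"
    using q0(3,8) q1(3,8) w_eq by (simp add: w'_def walk_grade_append)
  ultimately show ?thesis
    using w' by blast
qed

lemma replace_all_sink_pairs:
  assumes sink: "is_sink_of Arr s t S j" and w: "prewalk V Arr s t w a b" "b \<noteq> j"
    and inv: "\<forall>p\<in>set w. mutated_slice_path j p \<or> slice_path_to j p"
  shows "\<exists>w'. prewalk V Arr s t w' a b \<and> (\<forall>p\<in>set w'. mutated_slice_path j p)
    \<and> walk_grade w' = walk_grade w \<and> zigzag_sources True w \<subseteq> zigzag_sources True w'
    \<and> ((\<exists>p\<in>set w. ptgt t p = j) \<longrightarrow> \<tau> j \<in> zigzag_sources True w')"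
  using w inv
proof (induction "length (filter (\<lambda>p. ptgt t p = j) w)" arbitrary: w rule: less_induct)
  case less
  show ?case
  proof (cases "\<exists>p\<in>set w. ptgt t p = j")
    case True
    then obtain w1 where w1: "prewalk V Arr s t w1 a b"
        "\<forall>p\<in>set w1. mutated_slice_path j p \<or> slice_path_to j p"
        "length (filter (\<lambda>p. ptgt t p = j) w1) < length (filter (\<lambda>p. ptgt t p = j) w)"
        "walk_grade w1 = walk_grade w" "zigzag_sources True w1 = insert (\<tau> j) (zigzag_sources True w)"
      using replace_sink_pair[OF sink less.prems(1,2,3)] by blast
    then show ?thesis
      using less.hyps[OF w1(3) w1(1) less.prems(2) w1(2)] by auto
  next
    case False
    then show ?thesis
      using less.prems by (auto simp: slice_path_to_def)
  qed
qed

lemma prewalk_sink_mutation: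
  assumes sink: "is_sink_of Arr s t S j" and w: "prewalk V Arr s t w a b" "b \<noteq> j"
    and in_slice: "\<forall>p\<in>set w. pverts t p \<subseteq> S" and trivial: "\<forall>p\<in>set w. plen p = 0 \<longrightarrow> psrc p \<noteq> j"
    and j_sink: "j \<in> zigzag_sinks t True w"
  shows "\<exists>w'. prewalk V Arr s t w' a b \<and> (\<forall>p\<in>set w'. pverts t p \<subseteq> S - {j} \<union> {\<tau> j})
    \<and> (\<forall>p\<in>set w'. plen p = 0 \<longrightarrow> psrc p \<noteq> \<tau> j)
    \<and> walk_grade w' = walk_grade w \<and> \<tau> j \<in> zigzag_sources True w'"
proof -
  have j: "j \<in> S"
    using sink by (simp add: is_sink_of_def)
  have "mutated_slice_path j p \<or> slice_path_to j p" if p: "p \<in> set w" for p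
  proof (cases "j \<in> pverts t p")
    case True
    moreover have "is_path V Arr s t p"
      using w(1) p by (simp add: prewalk_def)
    ultimately have "ptgt t p = j"
      using sink_path_ends_at_sink[OF sink] in_slice p by blast
    moreover have "0 < plen p"
      using trivial p True pverts_trivial[of p t] by (cases "plen p = 0") auto
    ultimately show ?thesis
      using in_slice p by (simp add: slice_path_to_def)
  next
    case False
    then show ?thesis
      using mutated_slice_path_if_avoids[OF j] in_slice p by blast
  qed
  moreover have "\<exists>p\<in>set w. ptgt t p = j"
    using j_sink by (auto simp: zigzag_sinks_nth)
  ultimately obtain w' where "prewalk V Arr s t w' a b" "\<forall>p\<in>set w'. mutated_slice_path j p"
      "walk_grade w' = walk_grade w" "\<tau> j \<in> zigzag_sources True w'"
    using replace_all_sink_pairs[OF sink w] by blast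
  then show ?thesis
    unfolding mutated_slice_path_def by blast
qed

lemma walk_sink_mutation:
  assumes sink: "is_sink_of Arr s t S j" and w: "walk_in V Arr s t S w i0 i" "j \<in> walk_sinks t w"
    and ends: "i \<noteq> j" "i0 \<noteq> j"
  shows "\<exists>w'. walk_in V Arr s t (S - {j} \<union> {\<tau> j}) w' i0 i \<and> \<tau> j \<in> walk_sources w'
    \<and> walk_grade w = walk_grade w'"
proof -
  have walk: "prewalk V Arr s t w i0 i" "\<forall>p\<in>set w. pverts t p \<subseteq> S"
    using w by (auto simp: walk_in_def is_walk_iff_prewalk)
  have "\<forall>p\<in>set w. plen p = 0 \<longrightarrow> psrc p \<noteq> j"
    using walk_trivial_paths_avoid[of V Arr s t w i0 i j] w(1) ends by (simp add: walk_in_def)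
  moreover have "j \<in> zigzag_sinks t True w"
    using w(2) by (simp add: walk_sinks_eq)
  ultimately obtain w' where "prewalk V Arr s t w' i0 i" "\<forall>p\<in>set w'. pverts t p \<subseteq> S - {j} \<union> {\<tau> j}"
      "\<forall>p\<in>set w'. plen p = 0 \<longrightarrow> psrc p \<noteq> \<tau> j" "walk_grade w' = walk_grade w"
      "\<tau> j \<in> zigzag_sources True w'"
    using prewalk_sink_mutation[OF sink walk(1) ends(1) walk(2)] by blast
  then show ?thesis
    using prewalk_normalize[of V Arr s t w' i0 i "S - {j} \<union> {\<tau> j}" "\<tau> j"] by auto
qed

lemma walk_source_mutation:
  assumes source: "is_source_of Arr s t S j" and w: "walk_in V Arr s t S w i0 i" "j \<in> walk_sources w"
    and ends: "i \<noteq> j" "i0 \<noteq> j" "i0 \<in> S"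
  shows "\<exists>w'. walk_in V Arr s t (S - {j} \<union> {tau_inv V \<tau> j}) w' i0 i
    \<and> tau_inv V \<tau> j \<in> walk_sinks t w' \<and> walk_grade w = walk_grade w'"
proof -
  interpret opposite: stable_slice V Arr t s "\<lambda>p. is_path V Arr t s p \<and> bound (rev_path s p)" n
      "tau_inv V \<tau>" S
    by (rule stable_slice_opposite)
  let ?c = "tau_inv V \<tau> j"
  let ?S' = "S - {j} \<union> {?c}"
  have sink: "is_sink_of Arr t s S j" and j: "j \<in> S"
    using source by (simp_all add: is_sink_of_opposite is_source_of_def)
  have walk: "prewalk V Arr s t w i0 i"
    using w(1) by (simp add: walk_in_def is_walk_iff_prewalk)
  have "\<forall>p\<in>set w. pverts t p \<subseteq> S \<and> (plen p = 0 \<longrightarrow> psrc p \<noteq> j)"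
    using walk_trivial_paths_avoid[of V Arr s t w i0 i j] w(1) ends by (simp add: walk_in_def)
  then have "\<forall>p\<in>set (opposite_walk t i0 w). pverts s p \<subseteq> S \<and> (plen p = 0 \<longrightarrow> psrc p \<noteq> j)"
    by (rule opposite_walk_paths[OF walk]) (use ends in auto)
  moreover have "prewalk V Arr t s (opposite_walk t i0 w) i0 i"
    using prewalk_opposite_walk[OF walk] arrow_ends by blast
  moreover have "j \<in> zigzag_sinks s True (opposite_walk t i0 w)"
    using w(2) walk zigzag_sinks_opposite_walk[of w V Arr s t i0] by (auto simp: walk_sources_eq prewalk_def)
  ultimately obtain W where W: "prewalk V Arr t s W i0 i" "\<forall>p\<in>set W. pverts s p \<subseteq> ?S'"
      "\<forall>p\<in>set W. plen p = 0 \<longrightarrow> psrc p \<noteq> ?c"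
      "walk_grade W = walk_grade (opposite_walk t i0 w)" "?c \<in> zigzag_sources True W"
    using opposite.prewalk_sink_mutation[OF sink _ ends(1)] by blast
  have "\<forall>p\<in>set (opposite_walk s i0 W). pverts t p \<subseteq> ?S' \<and> (plen p = 0 \<longrightarrow> psrc p \<noteq> ?c)"
    by (rule opposite_walk_paths[OF W(1)]) (use W(2,3) ends opposite.tau_notin_slice[OF j] in auto)
  moreover have "prewalk V Arr s t (opposite_walk s i0 W) i0 i"
    using prewalk_opposite_walk[OF W(1)] arrow_ends by blast
  moreover have "?c \<in> zigzag_sinks t True (opposite_walk s i0 W)"
    using W(1,5) zigzag_sinks_opposite_walk[of W V Arr t s i0] by (auto simp: prewalk_def)
  moreover have "walk_grade (opposite_walk s i0 W) = walk_grade w"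
    using W(4) by (simp add: walk_grade_opposite_walk)
  ultimately show ?thesis
    using prewalk_normalize[of V Arr s t "opposite_walk s i0 W" i0 i ?S' ?c] by auto
qed

end

theorem lemma4p3:
  fixes V :: "'v set" and Arr :: "'a set" and s t :: "'a \<Rightarrow> 'v"
    and \<rho> :: "(('v,'a) path \<Rightarrow> 'k::field) set" and n :: nat and \<tau> :: "'v \<Rightarrow> 'v"
    and S :: "'v set" and i i0 j :: 'v
  assumes "stable_ntq V Arr s t \<rho> n \<tau>"
    and "acyclic_quiver V Arr s t"
    and "finite (tau_orbit V \<tau> ` V)"
    and "complete_tau_slice V Arr s t \<tau> S"
    and "i \<in> S" and "i0 \<in> S" and "j \<in> S" and "i \<noteq> j" and "i0 \<noteq> j"
  shows "(\<forall>w. is_sink_of Arr s t S j \<and> walk_in V Arr s t S w i0 i \<and> j \<in> walk_sinks t w \<longrightarrow>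
           (\<exists>w'. walk_in V Arr s t ((S - {j}) \<union> {\<tau> j}) w' i0 i \<and> \<tau> j \<in> walk_sources w'
                 \<and> walk_grade w = walk_grade w'))
       \<and> (\<forall>w. is_source_of Arr s t S j \<and> walk_in V Arr s t S w i0 i \<and> j \<in> walk_sources w \<longrightarrow>
           (\<exists>w'. walk_in V Arr s t ((S - {j}) \<union> {tau_inv V \<tau> j}) w' i0 i
                 \<and> tau_inv V \<tau> j \<in> walk_sinks t w' \<and> walk_grade w = walk_grade w'))"
proof -
  interpret stable_slice V Arr s t "bound_path V Arr s t \<rho>" n \<tau> S
    using stable_slice_bound_paths assms(1,2,4) .
  show ?thesis
    using walk_sink_mutation[of j _ i0 i] walk_source_mutation[of j _ i0 i] assms(6,8,9) by blast
qed

end
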